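(* Let $\mathcal{F}$ be a class of simple graphs and consider the assertions: (1) $\mathcal{F}$ is closed under edge contraction and edge deletion; (2) $\equiv_{\mathcal{F}}$ is preserved under taking complements, i.e.\ for all simple graphs $G$ and $H$ it holds that $G\equiv_{\mathcal{F}}H$ if and only if $\overline{G}\equiv_{\mathcal{F}}\overline{H}$; (3) $\mathrm{cl}(\mathcal{F})$ is minor-closed. Then (1) implies (2), and (2) and (3) are equivalent.
   Context: All graphs are finite, undirected, without multiple edges; simple means without loops. $\hom(F,G)$ is the number of homomorphisms $F\to G$; $G\equiv_{\mathcal{F}}H$ means $\hom(F,G)=\hom(F,H)$ for all $F\in\mathcal{F}$; $\mathrm{cl}(\mathcal{F})$ is the class of all simple graphs $K$ such that for all simple $G,H$, $G\equiv_{\mathcal{F}}H$ implies $\hom(K,G)=\hom(K,H)$. $\overline{G}$ is the complement of a simple graph $G$ (same vertex set, edges $\binom{V(G)}{2}\setminus E(G)$). For a partition $\mathcal{P}$ of $V(F)$, $F/\mathcal{P}$ is the simple graph with vertex set $\mathcal{P}$ and an edge $PQ$ ($P\neq Q$) iff some $p\in P,q\in Q$ are adjacent in $F$. $F'$ is obtained from $F$ by contracting edges if $F'\cong F/\mathcal{P}$ for a partition $\mathcal{P}$ with all $F[P]$ connected. Edge deletion produces a graph with the same vertex set and a subset of the edges. A minor of $F$ is a subgraph of a graph obtained from $F$ by contracting edges. *)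

theory Defs
  imports Main "HOL-Library.FuncSet" "HOL-Library.Disjoint_Sets"
begin

type_synonym 'a graph = "'a set \<times> 'a set set"

definition verts :: "'a graph \<Rightarrow> 'a set" where "verts G = fst G"
definition edges :: "'a graph \<Rightarrow> 'a set set" where "edges G = snd G"

definition simple_graph :: "'a graph \<Rightarrow> bool" where
  "simple_graph G \<longleftrightarrow> finite (verts G) \<and>
     (\<forall>e\<in>edges G. e \<subseteq> verts G \<and> card e = 2)"

definition homs :: "'a graph \<Rightarrow> 'b graph \<Rightarrow> ('a \<Rightarrow> 'b) set" where
  "homs F G = {f \<in> verts F \<rightarrow>\<^sub>E verts G.
      \<forall>u\<in>verts F. \<forall>v\<in>verts F. {u, v} \<in> edges F \<longrightarrow> {f u, f v} \<in> edges G}"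

definition hom :: "'a graph \<Rightarrow> 'b graph \<Rightarrow> nat" where
  "hom F G = card (homs F G)"

definition hom_equiv :: "'a graph set \<Rightarrow> 'b graph \<Rightarrow> 'b graph \<Rightarrow> bool" where
  "hom_equiv \<F> G H \<longleftrightarrow> (\<forall>F\<in>\<F>. hom F G = hom F H)"

text \<open>Homomorphism distinguishing closure; G, H range over all simple graphs
  (vertex type nat suffices to represent every finite graph).\<close>
definition cl :: "nat graph set \<Rightarrow> nat graph set" where
  "cl \<F> = {K. simple_graph K \<and>
     (\<forall>G H :: nat graph. simple_graph G \<longrightarrow> simple_graph H \<longrightarrow>
        hom_equiv \<F> G H \<longrightarrow> hom K G = hom K H)}"

definition complement :: "'a graph \<Rightarrow> 'a graph" where
  "complement G = (verts G, {e. e \<subseteq> verts G \<and> card e = 2} - edges G)"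

definition graph_iso :: "'a graph \<Rightarrow> 'b graph \<Rightarrow> bool" where
  "graph_iso G H \<longleftrightarrow> (\<exists>f. bij_betw f (verts G) (verts H) \<and>
     (\<forall>u\<in>verts G. \<forall>v\<in>verts G. {u, v} \<in> edges G \<longleftrightarrow> {f u, f v} \<in> edges H))"

definition quotient_graph :: "'a graph \<Rightarrow> 'a set set \<Rightarrow> 'a set graph" where
  "quotient_graph F P = (P, {{A, B} | A B. A \<in> P \<and> B \<in> P \<and> A \<noteq> B \<and>
      (\<exists>a\<in>A. \<exists>b\<in>B. {a, b} \<in> edges F)})"

definition induced_connected :: "'a graph \<Rightarrow> 'a set \<Rightarrow> bool" where
  "induced_connected F A \<longleftrightarrow> (\<forall>u\<in>A. \<forall>v\<in>A.
     (u, v) \<in> {(x, y). x \<in> A \<and> y \<in> A \<and> {x, y} \<in> edges F}\<^sup>*)"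

definition contraction_partition :: "'a graph \<Rightarrow> 'a set set \<Rightarrow> bool" where
  "contraction_partition F P \<longleftrightarrow> partition_on (verts F) P \<and> (\<forall>A\<in>P. induced_connected F A)"

definition contracts_to :: "'a graph \<Rightarrow> 'b graph \<Rightarrow> bool" where
  "contracts_to F F' \<longleftrightarrow> (\<exists>P. contraction_partition F P \<and> graph_iso F' (quotient_graph F P))"

definition subgraph :: "'a graph \<Rightarrow> 'a graph \<Rightarrow> bool" where
  "subgraph S G \<longleftrightarrow> verts S \<subseteq> verts G \<and> edges S \<subseteq> edges G \<and>
     (\<forall>e\<in>edges S. e \<subseteq> verts S)"

definition minor :: "'b graph \<Rightarrow> 'a graph \<Rightarrow> bool" where
  "minor M F \<longleftrightarrow> (\<exists>P S. contraction_partition F P \<and> subgraph S (quotient_graph F P) \<and>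
      graph_iso M S)"

definition closed_contraction :: "nat graph set \<Rightarrow> bool" where
  "closed_contraction \<F> \<longleftrightarrow> (\<forall>F\<in>\<F>. \<forall>F'::nat graph. simple_graph F' \<longrightarrow> contracts_to F F' \<longrightarrow> F' \<in> \<F>)"

definition closed_deletion :: "nat graph set \<Rightarrow> bool" where
  "closed_deletion \<F> \<longleftrightarrow> (\<forall>F\<in>\<F>. \<forall>E'. E' \<subseteq> edges F \<longrightarrow> (verts F, E') \<in> \<F>)"

definition minor_closed :: "nat graph set \<Rightarrow> bool" where
  "minor_closed \<C> \<longleftrightarrow> (\<forall>K\<in>\<C>. \<forall>M::nat graph. simple_graph M \<longrightarrow> minor M K \<longrightarrow> M \<in> \<C>)"

end

theory Submission
  imports Defs
begin

(*
  A map f from K to G is a homomorphism into the complement of G iff no edge of K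
  is collapsed by f or mapped to an edge of G. Expanding the product of these indicators over
  the edges of K writes hom(K, complement G) as a signed sum of hom(K', G), where K' ranges over
  the graphs obtained from K by deleting some edges and contracting others. So if F is closed
  under contraction and deletion, then G \<equiv>\<^sub>F H implies that the complements are equivalent;
  applied to cl(F), the same holds when cl(F) is minor-closed.

  Conversely, assume that the equivalence is preserved under complements. If hom(K, -) is
  determined by \<equiv>\<^sub>F, then so is the signed sum. Homomorphism counts from non-isomorphic
  graphs are linearly independent (Lovasz; direct products multiply the counts), so every
  isomorphism class in the sum with nonzero total coefficient is determined as well. This
  isolates the spanning subgraphs of K (all terms isomorphic to one carry the same sign), then
  all subgraphs (isolated vertices contribute a power of the number of vertices), and, by
  induction on the number of edges, the contractions of K.
*)

lemma verts_pair [simp]: "verts (V, E) = V"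
  by (simp add: verts_def)

lemma edges_pair [simp]: "edges (V, E) = E"
  by (simp add: edges_def)

lemma graph_collapse [simp]: "(verts G, edges G) = G"
  by (simp add: verts_def edges_def)

lemma graph_eqI: "verts G = verts H \<Longrightarrow> edges G = edges H \<Longrightarrow> G = H"
  by (metis graph_collapse)

lemma
  assumes "simple_graph G"
  shows simple_graph_finite_verts: "finite (verts G)"
    and simple_graph_edge_subset: "e \<in> edges G \<Longrightarrow> e \<subseteq> verts G"
    and simple_graph_card_edge: "e \<in> edges G \<Longrightarrow> card e = 2"
  using assms unfolding simple_graph_def by auto

lemma simple_graph_edgeE:
  assumes "simple_graph G" "e \<in> edges G"
  obtains u v where "e = {u, v}" "u \<noteq> v" "u \<in> verts G" "v \<in> verts G"
  using simple_graph_card_edge[OF assms] simple_graph_edge_subset[OF assms]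
  by (auto simp: card_2_iff)

lemma simple_graph_finite_edges: "simple_graph G \<Longrightarrow> finite (edges G)"
  by (meson Pow_iff finite_Pow_iff finite_subset simple_graph_edge_subset
      simple_graph_finite_verts subsetI)

lemma simple_graph_subgraph: "simple_graph T \<Longrightarrow> subgraph S T \<Longrightarrow> simple_graph S"
  unfolding simple_graph_def subgraph_def by (meson finite_subset subsetD)

lemma subgraph_spanning: "simple_graph K \<Longrightarrow> E' \<subseteq> edges K \<Longrightarrow> subgraph (verts K, E') K"
  unfolding subgraph_def by (auto dest: simple_graph_edge_subset)

lemma homs_simple:
  assumes "simple_graph F"
  shows "homs F G = {f \<in> verts F \<rightarrow>\<^sub>E verts G. \<forall>e\<in>edges F. f ` e \<in> edges G}"
proof -
  have "\<forall>e\<in>edges F. \<exists>u\<in>verts F. \<exists>v\<in>verts F. e = {u, v}"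
    using simple_graph_edgeE[OF assms] by metis
  then show ?thesis
    unfolding homs_def by auto
qed

lemma finite_homs: "finite (verts F) \<Longrightarrow> finite (verts G) \<Longrightarrow> finite (homs F G)"
  unfolding homs_def by (rule finite_subset[OF _ finite_PiE]) auto

lemma hom_empty_graph: "hom ({}, {}) G = 1"
  by (simp add: hom_def homs_def)

lemma simple_graph_no_verts:
  assumes "simple_graph G" "verts G = {}"
  shows "G = ({}, {})"
proof (rule graph_eqI)
  show "edges G = edges ({}, {})"
    using simple_graph_edge_subset[OF assms(1)] simple_graph_card_edge[OF assms(1)] assms(2)
    by fastforce
qed (simp add: assms(2))

lemma hom_add_isolated_verts:
  assumes V: "finite V" and W: "W \<subseteq> V" and D: "\<forall>e\<in>D. e \<subseteq> W"
  shows "hom (V, D) G = card (verts G) ^ card (V - W) * hom (W, D) G"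
proof -
  let ?split = "\<lambda>f. (restrict f W, restrict f (V - W))"
  let ?join = "\<lambda>ab x. if x \<in> W then fst ab x else snd ab x"
  have "bij_betw ?split (homs (V, D) G) (homs (W, D) G \<times> (V - W \<rightarrow>\<^sub>E verts G))"
  proof (rule bij_betw_byWitness[where f' = ?join])
    show "\<forall>f\<in>homs (V, D) G. ?join (?split f) = f"
      using W unfolding homs_def by (auto simp: PiE_iff extensional_def fun_eq_iff)
    show "\<forall>ab\<in>homs (W, D) G \<times> (V - W \<rightarrow>\<^sub>E verts G). ?split (?join ab) = ab"
      unfolding homs_def by (auto simp: PiE_iff extensional_def fun_eq_iff)
    show "?split ` homs (V, D) G \<subseteq> homs (W, D) G \<times> (V - W \<rightarrow>\<^sub>E verts G)"
      using W unfolding homs_def by (auto simp: subset_iff)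
    have "{u, v} \<subseteq> W" if "{u, v} \<in> D" for u v
      using D that by blast
    then show "?join ` (homs (W, D) G \<times> (V - W \<rightarrow>\<^sub>E verts G)) \<subseteq> homs (V, D) G"
      using W unfolding homs_def by (auto simp: PiE_iff extensional_def)
  qed
  then have "hom (V, D) G = hom (W, D) G * card (V - W \<rightarrow>\<^sub>E verts G)"
    unfolding hom_def card_cartesian_product[symmetric] by (rule bij_betw_same_card)
  then show ?thesis
    using V by (simp add: card_funcsetE)
qed

lemma card_eq_by_injections:
  assumes "inj_on f A" "f ` A \<subseteq> B" "inj_on g B" "g ` B \<subseteq> A"
  shows "card A = card B"
  using Schroeder_Bernstein[OF assms] bij_betw_same_card by blast

lemma
  assumes f: "f \<in> homs A B" "f ` verts A = verts B"
  shows inj_on_homs_precompose: "inj_on (\<lambda>k. restrict (k \<circ> f) (verts A)) (homs B G)"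
    and homs_precompose: "(\<lambda>k. restrict (k \<circ> f) (verts A)) ` homs B G \<subseteq> homs A G"
proof -
  show "inj_on (\<lambda>k. restrict (k \<circ> f) (verts A)) (homs B G)"
  proof (rule inj_onI)
    fix k k' assume k: "k \<in> homs B G" "k' \<in> homs B G"
      and eq: "restrict (k \<circ> f) (verts A) = restrict (k' \<circ> f) (verts A)"
    have "k y = k' y" if "y \<in> verts B" for y
    proof -
      have "y \<in> f ` verts A"
        using that f(2) by simp
      then obtain x where "x \<in> verts A" "y = f x"
        by (rule imageE)
      then show ?thesis
        using fun_cong[OF eq, of x] by simp
    qed
    moreover have "k \<in> extensional (verts B)" "k' \<in> extensional (verts B)"
      using k unfolding homs_def by (simp_all add: PiE_iff)
    ultimately show "k = k'"
      using extensionalityI by blast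
  qed
  show "(\<lambda>k. restrict (k \<circ> f) (verts A)) ` homs B G \<subseteq> homs A G"
    using f unfolding homs_def by fastforce
qed

lemma
  assumes f: "f \<in> homs G H" "inj_on f (verts G)"
  shows inj_on_homs_postcompose: "inj_on (\<lambda>h. restrict (f \<circ> h) (verts F)) (homs F G)"
    and homs_postcompose: "(\<lambda>h. restrict (f \<circ> h) (verts F)) ` homs F G \<subseteq> homs F H"
proof -
  show "inj_on (\<lambda>h. restrict (f \<circ> h) (verts F)) (homs F G)"
  proof (rule inj_onI)
    fix h h' assume h: "h \<in> homs F G" "h' \<in> homs F G"
      and eq: "restrict (f \<circ> h) (verts F) = restrict (f \<circ> h') (verts F)"
    have "h x = h' x" if "x \<in> verts F" for x
    proof -
      have "f (h x) = f (h' x)"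
        using that fun_cong[OF eq, of x] by simp
      moreover have "h x \<in> verts G" "h' x \<in> verts G"
        using that h unfolding homs_def by auto
      ultimately show ?thesis
        using f(2) by (meson inj_onD)
    qed
    moreover have "h \<in> extensional (verts F)" "h' \<in> extensional (verts F)"
      using h unfolding homs_def by (simp_all add: PiE_iff)
    ultimately show "h = h'"
      using extensionalityI by blast
  qed
  show "(\<lambda>h. restrict (f \<circ> h) (verts F)) ` homs F G \<subseteq> homs F H"
    using f(1) unfolding homs_def by fastforce
qed

lemma graph_iso_refl: "graph_iso G G"
  unfolding graph_iso_def by (rule exI[of _ id]) auto

lemma graph_iso_sym:
  assumes "graph_iso A B"
  shows "graph_iso B A"
proof -
  obtain f where f: "bij_betw f (verts A) (verts B)"
    "\<forall>u\<in>verts A. \<forall>v\<in>verts A. {u, v} \<in> edges A \<longleftrightarrow> {f u, f v} \<in> edges B"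
    using assms unfolding graph_iso_def by blast
  let ?g = "inv_into (verts A) f"
  have "bij_betw ?g (verts B) (verts A)"
    using f(1) by (rule bij_betw_inv_into)
  moreover have "{x, y} \<in> edges B \<longleftrightarrow> {?g x, ?g y} \<in> edges A"
    if "x \<in> verts B" "y \<in> verts B" for x y
    using that f bij_betw_inv_into_right[OF f(1)] bij_betwE[OF calculation] by metis
  ultimately show ?thesis
    unfolding graph_iso_def by blast
qed

lemma graph_iso_trans:
  assumes "graph_iso A B" "graph_iso B C"
  shows "graph_iso A C"
proof -
  obtain f where f: "bij_betw f (verts A) (verts B)"
    "\<forall>u\<in>verts A. \<forall>v\<in>verts A. {u, v} \<in> edges A \<longleftrightarrow> {f u, f v} \<in> edges B"
    using assms(1) unfolding graph_iso_def by blast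
  obtain g where g: "bij_betw g (verts B) (verts C)"
    "\<forall>u\<in>verts B. \<forall>v\<in>verts B. {u, v} \<in> edges B \<longleftrightarrow> {g u, g v} \<in> edges C"
    using assms(2) unfolding graph_iso_def by blast
  have "bij_betw (g \<circ> f) (verts A) (verts C)"
    using f(1) g(1) by (rule bij_betw_trans)
  moreover have "\<forall>u\<in>verts A. \<forall>v\<in>verts A. {u, v} \<in> edges A \<longleftrightarrow> {(g \<circ> f) u, (g \<circ> f) v} \<in> edges C"
    using f g by (simp add: bij_betwE)
  ultimately show ?thesis
    unfolding graph_iso_def by blast
qed

lemma graph_isoE:
  assumes "graph_iso A B"
  obtains f where "f \<in> homs A B" "bij_betw f (verts A) (verts B)"
proof -
  obtain f where f: "bij_betw f (verts A) (verts B)"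
    "\<forall>u\<in>verts A. \<forall>v\<in>verts A. {u, v} \<in> edges A \<longleftrightarrow> {f u, f v} \<in> edges B"
    using assms unfolding graph_iso_def by blast
  have "restrict f (verts A) \<in> homs A B"
    using f unfolding homs_def by (auto simp: bij_betwE)
  with f(1) that show thesis
    by simp
qed

lemma hom_iso_left:
  assumes "graph_iso A B"
  shows "hom A G = hom B G"
proof -
  obtain f where f: "f \<in> homs A B" "bij_betw f (verts A) (verts B)"
    using assms by (rule graph_isoE)
  obtain g where g: "g \<in> homs B A" "bij_betw g (verts B) (verts A)"
    using graph_iso_sym[OF assms] by (rule graph_isoE)
  have f': "f ` verts A = verts B" and g': "g ` verts B = verts A"
    using f(2) g(2) by (simp_all add: bij_betw_def)
  show ?thesis
    unfolding hom_def
    by (rule card_eq_by_injections[OF inj_on_homs_precompose[OF g(1) g'] homs_precompose[OF g(1) g']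
          inj_on_homs_precompose[OF f(1) f'] homs_precompose[OF f(1) f']])
qed

lemma hom_iso_right:
  assumes "graph_iso G H"
  shows "hom F G = hom F H"
proof -
  obtain f where f: "f \<in> homs G H" "bij_betw f (verts G) (verts H)"
    using assms by (rule graph_isoE)
  obtain g where g: "g \<in> homs H G" "bij_betw g (verts H) (verts G)"
    using graph_iso_sym[OF assms] by (rule graph_isoE)
  have f': "inj_on f (verts G)" and g': "inj_on g (verts H)"
    using f(2) g(2) by (simp_all add: bij_betw_def)
  show ?thesis
    unfolding hom_def
    by (rule card_eq_by_injections[OF inj_on_homs_postcompose[OF f(1) f'] homs_postcompose[OF f(1) f']
          inj_on_homs_postcompose[OF g(1) g'] homs_postcompose[OF g(1) g']])
qed

lemma
  assumes "simple_graph A" "f \<in> homs A B" "inj_on f (verts A)"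
  shows inj_on_image_edges: "inj_on ((`) f) (edges A)"
    and image_edges_subset: "(`) f ` edges A \<subseteq> edges B"
proof -
  show "inj_on ((`) f) (edges A)"
    using assms(1,3) by (meson inj_onI inj_on_image_eq_iff simple_graph_edge_subset)
  show "(`) f ` edges A \<subseteq> edges B"
    using assms(1,2) by (auto simp: homs_simple)
qed

lemma card_verts_iso: "graph_iso A B \<Longrightarrow> card (verts A) = card (verts B)"
  unfolding graph_iso_def by (metis bij_betw_same_card)

lemma card_edges_iso:
  assumes "graph_iso A B" "simple_graph A" "simple_graph B"
  shows "card (edges A) = card (edges B)"
proof -
  obtain f where f: "f \<in> homs A B" "bij_betw f (verts A) (verts B)"
    using assms(1) by (rule graph_isoE)
  obtain g where g: "g \<in> homs B A" "bij_betw g (verts B) (verts A)"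
    using graph_iso_sym[OF assms(1)] by (rule graph_isoE)
  have f': "inj_on f (verts A)" and g': "inj_on g (verts B)"
    using f(2) g(2) by (simp_all add: bij_betw_def)
  show ?thesis
    by (rule card_eq_by_injections[OF inj_on_image_edges[OF assms(2) f(1) f']
          image_edges_subset[OF assms(2) f(1) f'] inj_on_image_edges[OF assms(3) g(1) g']
          image_edges_subset[OF assms(3) g(1) g']])
qed

definition graph_image :: "('a \<Rightarrow> 'b) \<Rightarrow> 'a graph \<Rightarrow> 'b graph" where
  "graph_image f G = (f ` verts G, (`) f ` edges G)"

lemma verts_graph_image [simp]: "verts (graph_image f G) = f ` verts G"
  and edges_graph_image [simp]: "edges (graph_image f G) = (`) f ` edges G"
  by (simp_all add: graph_image_def)

lemma simple_graph_image:
  assumes "simple_graph G" "inj_on f (verts G)"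
  shows "simple_graph (graph_image f G)"
  using assms unfolding simple_graph_def
  by (auto simp: card_image inj_on_subset)

lemma graph_iso_image:
  assumes G: "simple_graph G" and f: "inj_on f (verts G)"
  shows "graph_iso G (graph_image f G)"
  unfolding graph_iso_def
proof (intro exI conjI ballI)
  show "bij_betw f (verts G) (verts (graph_image f G))"
    using f by (simp add: bij_betw_def)
  fix u v assume uv: "u \<in> verts G" "v \<in> verts G"
  show "{u, v} \<in> edges G \<longleftrightarrow> {f u, f v} \<in> edges (graph_image f G)"
  proof
    assume "{u, v} \<in> edges G"
    then show "{f u, f v} \<in> edges (graph_image f G)"
      using imageI[of "{u, v}" "edges G" "(`) f"] by simp
  next
    assume "{f u, f v} \<in> edges (graph_image f G)"
    then obtain e where e: "e \<in> edges G" "f ` e = f ` {u, v}"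
      by auto
    moreover have "{u, v} \<subseteq> verts G"
      using uv by simp
    ultimately have "e = {u, v}"
      using inj_on_image_eq_iff[OF f simple_graph_edge_subset[OF G e(1)]] by blast
    with e(1) show "{u, v} \<in> edges G"
      by simp
  qed
qed

text \<open>Quotient graphs have sets as vertices; \<open>natcopy\<close> moves a finite graph to vertices in
  \<open>nat\<close>, the vertex type of the statement.\<close>

definition natcopy :: "'a graph \<Rightarrow> nat graph" where
  "natcopy G = graph_image (SOME f. inj_on f (verts G)) G"

lemma inj_on_natcopy:
  assumes "finite (verts G)"
  shows "inj_on (SOME f :: 'a \<Rightarrow> nat. inj_on f (verts G)) (verts G)"
  using finite_imp_inj_to_nat_seg[OF assms] by (metis someI_ex)

lemma simple_graph_natcopy: "simple_graph G \<Longrightarrow> simple_graph (natcopy G)"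
  unfolding natcopy_def by (simp add: inj_on_natcopy simple_graph_finite_verts simple_graph_image)

lemma graph_iso_natcopy: "simple_graph G \<Longrightarrow> graph_iso G (natcopy G)"
  unfolding natcopy_def by (simp add: inj_on_natcopy simple_graph_finite_verts graph_iso_image)

lemma hom_natcopy_right: "simple_graph G \<Longrightarrow> hom F (natcopy G) = hom F G"
  by (rule hom_iso_right[OF graph_iso_natcopy, symmetric])

section \<open>Direct products and Lovasz's theorem\<close>

definition direct_product :: "'a graph \<Rightarrow> 'b graph \<Rightarrow> ('a \<times> 'b) graph" where
  "direct_product G T = (verts G \<times> verts T,
     {{(g, t), (g', t')} | g t g' t'. {g, g'} \<in> edges G \<and> {t, t'} \<in> edges T})"

lemma verts_direct_product [simp]: "verts (direct_product G T) = verts G \<times> verts T"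
  by (simp add: direct_product_def)

lemma doubleton_in_edges_direct_product [simp]:
  "{p, q} \<in> edges (direct_product G T) \<longleftrightarrow> {fst p, fst q} \<in> edges G \<and> {snd p, snd q} \<in> edges T"
proof
  assume "{p, q} \<in> edges (direct_product G T)"
  then obtain g t g' t' where "{p, q} = {(g, t), (g', t')}" "{g, g'} \<in> edges G" "{t, t'} \<in> edges T"
    by (auto simp: direct_product_def)
  then show "{fst p, fst q} \<in> edges G \<and> {snd p, snd q} \<in> edges T"
    by (auto simp: doubleton_eq_iff insert_commute)
next
  assume "{fst p, fst q} \<in> edges G \<and> {snd p, snd q} \<in> edges T"
  moreover have "{p, q} = {(fst p, snd p), (fst q, snd q)}"
    by simp
  ultimately show "{p, q} \<in> edges (direct_product G T)"
    unfolding direct_product_def edges_pair mem_Collect_eq by blast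
qed

lemma simple_graph_direct_product:
  assumes "simple_graph G" "simple_graph T"
  shows "simple_graph (direct_product G T)"
  using assms unfolding simple_graph_def direct_product_def
  by (fastforce simp: card_2_iff)

lemma hom_direct_product: "hom F (direct_product G T) = hom F G * hom F T"
proof -
  let ?V = "verts F"
  let ?pair = "\<lambda>ab. restrict (\<lambda>v. (fst ab v, snd ab v)) ?V"
  let ?split = "\<lambda>h. (restrict (fst \<circ> h) ?V, restrict (snd \<circ> h) ?V)"
  have "bij_betw ?pair (homs F G \<times> homs F T) (homs F (direct_product G T))"
  proof (rule bij_betw_byWitness[where f' = ?split])
    show "\<forall>ab\<in>homs F G \<times> homs F T. ?split (?pair ab) = ab"
      unfolding homs_def by (simp add: PiE_iff extensional_def fun_eq_iff prod_eq_iff)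
    show "\<forall>h\<in>homs F (direct_product G T). ?pair (?split h) = h"
      unfolding homs_def by (simp add: PiE_iff extensional_def fun_eq_iff)
    show "?pair ` (homs F G \<times> homs F T) \<subseteq> homs F (direct_product G T)"
      unfolding homs_def by (simp add: PiE_iff image_subset_iff)
    show "?split ` homs F (direct_product G T) \<subseteq> homs F G \<times> homs F T"
      unfolding homs_def by (simp add: PiE_iff mem_Times_iff image_subset_iff)
  qed
  then show ?thesis
    unfolding hom_def card_cartesian_product[symmetric] by (rule bij_betw_same_card[symmetric])
qed

lemma finite_subgraphs:
  assumes "simple_graph T"
  shows "finite {S. subgraph S T}"
proof (rule finite_subset)
  show "{S. subgraph S T} \<subseteq> Pow (verts T) \<times> Pow (edges T)"
    by (auto simp: subgraph_def verts_def edges_def mem_Times_iff)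
  show "finite (Pow (verts T) \<times> Pow (edges T))"
    using assms by (simp add: simple_graph_finite_verts simple_graph_finite_edges)
qed

lemma subgraph_size_less:
  assumes T: "simple_graph T" and S: "subgraph S T" "S \<noteq> T"
  shows "card (verts S) + card (edges S) < card (verts T) + card (edges T)"
proof -
  have sub: "verts S \<subseteq> verts T" "edges S \<subseteq> edges T"
    using S(1) by (auto simp: subgraph_def)
  moreover have fin: "finite (verts T)" "finite (edges T)"
    using T by (simp_all add: simple_graph_finite_verts simple_graph_finite_edges)
  ultimately have "card (verts S) \<le> card (verts T)" "card (edges S) \<le> card (edges T)"
    by (simp_all add: card_mono)
  moreover have "verts S \<subset> verts T \<or> edges S \<subset> edges T"
    using S(2) sub graph_eqI[of S T] by auto
  then have "card (verts S) < card (verts T) \<or> card (edges S) < card (edges T)"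
    by (elim disjE) (simp_all add: fin psubset_card_mono)
  ultimately show ?thesis
    by linarith
qed

definition surj_homs :: "'a graph \<Rightarrow> 'b graph \<Rightarrow> ('a \<Rightarrow> 'b) set" where
  "surj_homs F T = {f \<in> homs F T. graph_image f F = T}"

lemma finite_surj_homs: "finite (verts F) \<Longrightarrow> finite (verts T) \<Longrightarrow> finite (surj_homs F T)"
  unfolding surj_homs_def by (simp add: finite_homs)

lemma hom_eq_sum_surj_homs:
  assumes F: "simple_graph F" and T: "simple_graph T"
  shows "hom F T = (\<Sum>S\<in>{S. subgraph S T}. card (surj_homs F S))"
proof -
  have homs_eq: "homs F T = (\<Union>S\<in>{S. subgraph S T}. surj_homs F S)"
  proof (intro equalityI subsetI)
    fix f assume f: "f \<in> homs F T"
    then have "subgraph (graph_image f F) T"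
      using F by (fastforce simp: homs_simple subgraph_def dest: simple_graph_edge_subset)
    moreover have "f \<in> surj_homs F (graph_image f F)"
      using f F by (auto simp: homs_simple surj_homs_def)
    ultimately show "f \<in> (\<Union>S\<in>{S. subgraph S T}. surj_homs F S)"
      by blast
  next
    fix f assume "f \<in> (\<Union>S\<in>{S. subgraph S T}. surj_homs F S)"
    then show "f \<in> homs F T"
      using F by (auto simp: homs_simple subgraph_def surj_homs_def)
  qed
  have "\<forall>S\<in>{S. subgraph S T}. finite (surj_homs F S)"
    using simple_graph_subgraph[OF T] F by (simp add: finite_surj_homs simple_graph_finite_verts)
  moreover have "\<forall>S\<in>{S. subgraph S T}. \<forall>S'\<in>{S. subgraph S T}. S \<noteq> S' \<longrightarrow>
      surj_homs F S \<inter> surj_homs F S' = {}"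
    by (auto simp: surj_homs_def)
  ultimately show ?thesis
    unfolding hom_def homs_eq by (rule card_UN_disjoint[OF finite_subgraphs[OF T]])
qed

lemma card_surj_homs_eq:
  fixes F F' T :: "'a graph"
  assumes F: "simple_graph F" and F': "simple_graph F'"
    and hom_eq: "\<And>T :: 'a graph. simple_graph T \<Longrightarrow> hom F T = hom F' T"
  shows "simple_graph T \<Longrightarrow> card (surj_homs F T) = card (surj_homs F' T)"
proof (induction T rule: measure_induct_rule[where f = "\<lambda>T. card (verts T) + card (edges T)"])
  case (less T)
  let ?S = "{S. subgraph S T} - {T}"
  have "card (surj_homs F S) = card (surj_homs F' S)" if "S \<in> ?S" for S
    using that less subgraph_size_less simple_graph_subgraph by blast
  moreover have "hom F T = card (surj_homs F T) + (\<Sum>S\<in>?S. card (surj_homs F S))"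
    and "hom F' T = card (surj_homs F' T) + (\<Sum>S\<in>?S. card (surj_homs F' S))"
    using less.prems F F' subgraph_spanning[OF less.prems, of "edges T"]
    by (simp_all add: hom_eq_sum_surj_homs finite_subgraphs sum.remove)
  ultimately show ?case
    using hom_eq[OF less.prems] by simp
qed

lemma restrict_id_in_surj_homs:
  assumes "simple_graph F"
  shows "restrict id (verts F) \<in> surj_homs F F"
proof -
  have "restrict id (verts F) ` e = e" if "e \<in> edges F" for e
    using simple_graph_edge_subset[OF assms that] by auto
  then have "graph_image (restrict id (verts F)) F = F"
    by (intro graph_eqI) simp_all
  moreover have "restrict id (verts F) \<in> homs F F"
    unfolding homs_def by auto
  ultimately show ?thesis
    by (simp add: surj_homs_def)
qed

lemma surj_homs_nonempty_if_hom_eq: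
  fixes F F' :: "'a graph"
  assumes F: "simple_graph F" and F': "simple_graph F'"
    and hom_eq: "\<And>T :: 'a graph. simple_graph T \<Longrightarrow> hom F T = hom F' T"
  shows "surj_homs F F' \<noteq> {}"
proof -
  have "finite (surj_homs F' F')"
    using F' by (simp add: finite_surj_homs simple_graph_finite_verts)
  then have "card (surj_homs F' F') > 0"
    using restrict_id_in_surj_homs[OF F'] card_gt_0_iff by blast
  then show ?thesis
    using card_surj_homs_eq[OF F F' hom_eq F'] by force
qed

text \<open>Lovasz's argument: counting surjective homomorphisms yields surjections \<open>F \<rightarrow> F'\<close> and
  \<open>F' \<rightarrow> F\<close>; comparing vertex counts makes the first one injective.\<close>

theorem graph_iso_if_hom_eq:
  fixes F F' :: "'a graph"
  assumes F: "simple_graph F" and F': "simple_graph F'"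
    and hom_eq: "\<And>T :: 'a graph. simple_graph T \<Longrightarrow> hom F T = hom F' T"
  shows "graph_iso F F'"
proof -
  obtain f where f: "f \<in> surj_homs F F'"
    using surj_homs_nonempty_if_hom_eq[OF F F' hom_eq] by blast
  have "\<And>T :: 'a graph. simple_graph T \<Longrightarrow> hom F' T = hom F T"
    using hom_eq by simp
  then obtain g where g: "g \<in> surj_homs F' F"
    using surj_homs_nonempty_if_hom_eq[OF F' F] by blast
  have imgs: "graph_image f F = F'" "graph_image g F' = F"
    using f g by (simp_all add: surj_homs_def)
  have fF: "f ` verts F = verts F'" and gF: "g ` verts F' = verts F"
    using arg_cong[OF imgs(1), of verts] arg_cong[OF imgs(2), of verts] by simp_all
  have "card (verts F') \<le> card (verts F)"
    using card_image_le[OF simple_graph_finite_verts[OF F], of f] fF by simp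
  moreover have "card (verts F) \<le> card (verts F')"
    using card_image_le[OF simple_graph_finite_verts[OF F'], of g] gF by simp
  ultimately have "inj_on f (verts F)"
    using fF F by (simp add: eq_card_imp_inj_on simple_graph_finite_verts)
  with F have "graph_iso F (graph_image f F)"
    by (rule graph_iso_image)
  then show ?thesis
    using imgs(1) by simp
qed

lemma exists_hom_neq_if_not_iso:
  assumes F: "simple_graph F" and F': "simple_graph F'" and not_iso: "\<not> graph_iso F F'"
  obtains T :: "nat graph" where "simple_graph T" "hom F T \<noteq> hom F' T"
proof -
  have "\<not> graph_iso (natcopy F) (natcopy F')"
  proof
    assume "graph_iso (natcopy F) (natcopy F')"
    then have "graph_iso F F'"
      using graph_iso_trans[OF graph_iso_trans[OF graph_iso_natcopy[OF F]]
          graph_iso_sym[OF graph_iso_natcopy[OF F']]] by blast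
    with not_iso show False ..
  qed
  then have "\<not> (\<forall>T :: nat graph. simple_graph T \<longrightarrow> hom (natcopy F) T = hom (natcopy F') T)"
    using graph_iso_if_hom_eq[OF simple_graph_natcopy[OF F] simple_graph_natcopy[OF F']] by blast
  then obtain T :: "nat graph" where "simple_graph T" "hom (natcopy F) T \<noteq> hom (natcopy F') T"
    by blast
  moreover have "hom (natcopy F) T = hom F T" "hom (natcopy F') T = hom F' T"
    using hom_iso_left[OF graph_iso_natcopy[OF F]] hom_iso_left[OF graph_iso_natcopy[OF F']] by metis+
  ultimately show thesis
    using that by simp
qed

section \<open>Linear independence of homomorphism counts\<close>

definition hom_invariant :: "nat graph set \<Rightarrow> (nat graph \<Rightarrow> 'b) \<Rightarrow> bool" where
  "hom_invariant \<F> \<phi> \<longleftrightarrow>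
     (\<forall>G H. simple_graph G \<longrightarrow> simple_graph H \<longrightarrow> hom_equiv \<F> G H \<longrightarrow> \<phi> G = \<phi> H)"

lemma hom_invariantI:
  "(\<And>G H. simple_graph G \<Longrightarrow> simple_graph H \<Longrightarrow> hom_equiv \<F> G H \<Longrightarrow> \<phi> G = \<phi> H)
    \<Longrightarrow> hom_invariant \<F> \<phi>"
  unfolding hom_invariant_def by blast

lemma hom_invariantD:
  "hom_invariant \<F> \<phi> \<Longrightarrow> simple_graph G \<Longrightarrow> simple_graph H \<Longrightarrow> hom_equiv \<F> G H \<Longrightarrow> \<phi> G = \<phi> H"
  unfolding hom_invariant_def by blast

lemma mem_cl_iff: "K \<in> cl \<F> \<longleftrightarrow> simple_graph K \<and> hom_invariant \<F> (hom K)"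
  unfolding cl_def hom_invariant_def by simp

lemma hom_invariant_sum:
  assumes "\<And>i. i \<in> I \<Longrightarrow> hom_invariant \<F> (hom (Fs i))"
  shows "hom_invariant \<F> (\<lambda>G. \<Sum>i\<in>I. \<alpha> i * int (hom (Fs i) G))"
proof (rule hom_invariantI)
  fix G H :: "nat graph" assume "simple_graph G" "simple_graph H" "hom_equiv \<F> G H"
  then show "(\<Sum>i\<in>I. \<alpha> i * int (hom (Fs i) G)) = (\<Sum>i\<in>I. \<alpha> i * int (hom (Fs i) H))"
    using hom_invariantD[OF assms] by (intro sum.cong) auto
qed

lemma hom_invariant_add_cancel:
  fixes f g :: "nat graph \<Rightarrow> 'b :: cancel_semigroup_add"
  assumes "hom_invariant \<F> (\<lambda>G. f G + g G)" "hom_invariant \<F> f"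
  shows "hom_invariant \<F> g"
  using assms unfolding hom_invariant_def by (metis add_left_cancel)

lemma hom_equiv_direct_product:
  assumes "hom_equiv \<F> G H" "simple_graph G" "simple_graph H" "simple_graph T"
  shows "hom_equiv \<F> (natcopy (direct_product G T)) (natcopy (direct_product H T))"
  using assms
  by (simp add: hom_equiv_def hom_natcopy_right simple_graph_direct_product hom_direct_product)

lemma hom_invariant_direct_product:
  assumes \<phi>: "hom_invariant \<F> \<phi>" and T: "simple_graph T"
  shows "hom_invariant \<F> (\<lambda>G. \<phi> (natcopy (direct_product G T)))"
proof (rule hom_invariantI)
  fix G H :: "nat graph" assume "simple_graph G" "simple_graph H" "hom_equiv \<F> G H"
  with T show "\<phi> (natcopy (direct_product G T)) = \<phi> (natcopy (direct_product H T))"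
    by (intro hom_invariantD[OF \<phi>] simple_graph_natcopy simple_graph_direct_product
        hom_equiv_direct_product)
qed

text \<open>Multiplying by \<open>hom(-, T)\<close> (a direct product with \<open>T\<close>) and subtracting \<open>hom(K, T)\<close> times
  the original combination kills every term isomorphic to \<open>K\<close>.\<close>

lemma hom_invariant_lincomb_eliminate:
  fixes Fs :: "'i \<Rightarrow> 'a graph" and \<alpha> :: "'i \<Rightarrow> int" and K :: "'b graph"
  assumes I: "finite I" and inv: "hom_invariant \<F> (\<lambda>G. \<Sum>i\<in>I. \<alpha> i * int (hom (Fs i) G))"
    and T: "simple_graph T"
  shows "hom_invariant \<F> (\<lambda>G. \<Sum>i\<in>{i\<in>I. \<not> graph_iso (Fs i) K}.
           \<alpha> i * (int (hom (Fs i) T) - int (hom K T)) * int (hom (Fs i) G))"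
proof -
  let ?\<phi> = "\<lambda>G. \<Sum>i\<in>I. \<alpha> i * int (hom (Fs i) G)"
  have eq: "(\<Sum>i\<in>{i\<in>I. \<not> graph_iso (Fs i) K}.
              \<alpha> i * (int (hom (Fs i) T) - int (hom K T)) * int (hom (Fs i) G))
          = ?\<phi> (natcopy (direct_product G T)) - int (hom K T) * ?\<phi> G"
    if G: "simple_graph G" for G
  proof -
    have "?\<phi> (natcopy (direct_product G T)) - int (hom K T) * ?\<phi> G
        = (\<Sum>i\<in>I. \<alpha> i * (int (hom (Fs i) T) - int (hom K T)) * int (hom (Fs i) G))"
      using G T
      by (simp add: hom_natcopy_right simple_graph_direct_product hom_direct_product
          sum_distrib_left sum_subtractf[symmetric] algebra_simps)
    also have "\<dots> = (\<Sum>i\<in>{i\<in>I. \<not> graph_iso (Fs i) K}.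
                      \<alpha> i * (int (hom (Fs i) T) - int (hom K T)) * int (hom (Fs i) G))"
      using hom_iso_left[of "Fs _" K T] by (intro sum.mono_neutral_right[OF I]) auto
    finally show ?thesis
      by simp
  qed
  show ?thesis
  proof (rule hom_invariantI)
    fix G H :: "nat graph" assume GH: "simple_graph G" "simple_graph H" "hom_equiv \<F> G H"
    then show "(\<Sum>i\<in>{i\<in>I. \<not> graph_iso (Fs i) K}.
                 \<alpha> i * (int (hom (Fs i) T) - int (hom K T)) * int (hom (Fs i) G))
             = (\<Sum>i\<in>{i\<in>I. \<not> graph_iso (Fs i) K}.
                 \<alpha> i * (int (hom (Fs i) T) - int (hom K T)) * int (hom (Fs i) H))"
      unfolding eq[OF GH(1)] eq[OF GH(2)]
      using hom_invariantD[OF inv GH] hom_invariantD[OF hom_invariant_direct_product[OF inv T] GH]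
      by simp
  qed
qed

lemma hom_invariant_of_lincomb_iso:
  fixes Fs :: "'i \<Rightarrow> 'a graph" and \<alpha> :: "'i \<Rightarrow> int"
  assumes inv: "hom_invariant \<F> (\<lambda>G. \<Sum>i\<in>I. \<alpha> i * int (hom (Fs i) G))"
    and iso: "\<forall>i\<in>I. graph_iso (Fs i) K" and nonzero: "(\<Sum>i\<in>I. \<alpha> i) \<noteq> 0"
  shows "hom_invariant \<F> (hom K)"
proof (rule hom_invariantI)
  have lin: "(\<Sum>i\<in>I. \<alpha> i * int (hom (Fs i) G)) = (\<Sum>i\<in>I. \<alpha> i) * int (hom K G)" for G
    unfolding sum_distrib_right using iso hom_iso_left[of "Fs _" K G] by (intro sum.cong) auto
  fix G H :: "nat graph" assume "simple_graph G" "simple_graph H" "hom_equiv \<F> G H"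
  then have "(\<Sum>i\<in>I. \<alpha> i) * int (hom K G) = (\<Sum>i\<in>I. \<alpha> i) * int (hom K H)"
    using hom_invariantD[OF inv] unfolding lin by blast
  with nonzero show "hom K G = hom K H"
    by simp
qed

text \<open>Linear independence of homomorphism counts from non-isomorphic graphs: the other
  isomorphism classes are eliminated one at a time.\<close>

lemma hom_invariant_of_lincomb:
  fixes Fs :: "'i \<Rightarrow> 'a graph" and \<alpha> :: "'i \<Rightarrow> int"
  assumes "finite I" "\<forall>i\<in>I. simple_graph (Fs i)"
    and "hom_invariant \<F> (\<lambda>G. \<Sum>i\<in>I. \<alpha> i * int (hom (Fs i) G))"
    and "j \<in> I" "(\<Sum>i\<in>{i\<in>I. graph_iso (Fs i) (Fs j)}. \<alpha> i) \<noteq> 0"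
  shows "hom_invariant \<F> (hom (Fs j))"
  using assms
proof (induction "card {i\<in>I. \<not> graph_iso (Fs i) (Fs j)}" arbitrary: I \<alpha> rule: less_induct)
  case less
  note I = less.prems(1) and simple = less.prems(2) and inv = less.prems(3)
    and j = less.prems(4) and class_sum = less.prems(5)
  show ?case
  proof (cases "\<forall>i\<in>I. graph_iso (Fs i) (Fs j)")
    case True
    then have "{i\<in>I. graph_iso (Fs i) (Fs j)} = I"
      by blast
    with True class_sum show ?thesis
      by (intro hom_invariant_of_lincomb_iso[OF inv]) simp_all
  next
    case False
    then obtain k where k: "k \<in> I" "\<not> graph_iso (Fs k) (Fs j)"
      by blast
    then have "\<not> graph_iso (Fs j) (Fs k)"
      using graph_iso_sym by blast
    then obtain T :: "nat graph" where T: "simple_graph T" "hom (Fs j) T \<noteq> hom (Fs k) T"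
      using exists_hom_neq_if_not_iso simple j k(1) by metis
    define I' where "I' = {i\<in>I. \<not> graph_iso (Fs i) (Fs k)}"
    define \<alpha>' where "\<alpha>' i = \<alpha> i * (int (hom (Fs i) T) - int (hom (Fs k) T))" for i
    have inv': "hom_invariant \<F> (\<lambda>G. \<Sum>i\<in>I'. \<alpha>' i * int (hom (Fs i) G))"
      unfolding I'_def \<alpha>'_def by (rule hom_invariant_lincomb_eliminate[OF I inv T(1)])
    have class_eq: "{i\<in>I'. graph_iso (Fs i) (Fs j)} = {i\<in>I. graph_iso (Fs i) (Fs j)}"
      unfolding I'_def using k(2) graph_iso_sym graph_iso_trans by blast
    have "(\<Sum>i\<in>{i\<in>I'. graph_iso (Fs i) (Fs j)}. \<alpha>' i)
        = (\<Sum>i\<in>{i\<in>I. graph_iso (Fs i) (Fs j)}. \<alpha> i) * (int (hom (Fs j) T) - int (hom (Fs k) T))"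
      unfolding class_eq \<alpha>'_def sum_distrib_right
      using hom_iso_left[of "Fs _" "Fs j" T] by (intro sum.cong) auto
    then have class_sum': "(\<Sum>i\<in>{i\<in>I'. graph_iso (Fs i) (Fs j)}. \<alpha>' i) \<noteq> 0"
      using class_sum T(2) by simp
    have "{i\<in>I'. \<not> graph_iso (Fs i) (Fs j)} \<subset> {i\<in>I. \<not> graph_iso (Fs i) (Fs j)}"
      unfolding I'_def using k graph_iso_refl by blast
    then have "card {i\<in>I'. \<not> graph_iso (Fs i) (Fs j)} < card {i\<in>I. \<not> graph_iso (Fs i) (Fs j)}"
      using I by (simp add: psubset_card_mono)
    moreover have "j \<in> I'"
      unfolding I'_def using j \<open>\<not> graph_iso (Fs j) (Fs k)\<close> by blast
    ultimately show ?thesis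
      using less.hyps[of I' \<alpha>'] I simple inv' class_sum' unfolding I'_def by auto
  qed
qed

lemma sum_nonzero_if_values_zero_or_same:
  fixes \<alpha> :: "'i \<Rightarrow> int"
  assumes "finite C" "j \<in> C" "\<alpha> j \<noteq> 0" "\<forall>i\<in>C. \<alpha> i = 0 \<or> \<alpha> i = \<alpha> j"
  shows "sum \<alpha> C \<noteq> 0"
proof -
  have "sum \<alpha> C = (\<Sum>i\<in>{i\<in>C. \<alpha> i = \<alpha> j}. \<alpha> i)"
    using assms(1,4) by (intro sum.mono_neutral_right) auto
  also have "\<dots> = \<alpha> j * int (card {i\<in>C. \<alpha> i = \<alpha> j})"
    by simp
  finally show ?thesis
    using assms(1-3) by (auto simp: card_gt_0_iff)
qed

lemma hom_invariant_of_lincomb_single_sign: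
  fixes Fs :: "'i \<Rightarrow> 'a graph" and \<alpha> :: "'i \<Rightarrow> int"
  assumes "finite I" "\<forall>i\<in>I. simple_graph (Fs i)"
    and "hom_invariant \<F> (\<lambda>G. \<Sum>i\<in>I. \<alpha> i * int (hom (Fs i) G))"
    and "j \<in> I" "\<alpha> j \<noteq> 0" "\<forall>i\<in>I. graph_iso (Fs i) (Fs j) \<longrightarrow> \<alpha> i = 0 \<or> \<alpha> i = \<alpha> j"
  shows "hom_invariant \<F> (hom (Fs j))"
proof (rule hom_invariant_of_lincomb[OF assms(1-4)])
  show "(\<Sum>i\<in>{i\<in>I. graph_iso (Fs i) (Fs j)}. \<alpha> i) \<noteq> 0"
    using assms(1,4-6) graph_iso_refl[of "Fs j"] by (intro sum_nonzero_if_values_zero_or_same) auto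
qed

section \<open>Components and quotient graphs\<close>

lemma verts_quotient_graph [simp]: "verts (quotient_graph F P) = P"
  by (simp add: quotient_graph_def verts_def)

lemma edges_quotient_graph:
  "edges (quotient_graph F P) =
     {{A, B} | A B. A \<in> P \<and> B \<in> P \<and> A \<noteq> B \<and> (\<exists>a\<in>A. \<exists>b\<in>B. {a, b} \<in> edges F)}"
  by (simp add: quotient_graph_def edges_def)

lemma simple_graph_quotient_graph:
  assumes "finite P"
  shows "simple_graph (quotient_graph F P)"
proof -
  have "card {A, B} = 2" if "A \<noteq> B" for A B :: "'a set"
    using that by simp
  with assms show ?thesis
    unfolding simple_graph_def edges_quotient_graph verts_quotient_graph by blast
qed

lemma quotient_graph_diff:
  assumes P: "partition_on V P" and A: "\<forall>e\<in>A. \<exists>C\<in>P. e \<subseteq> C"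
  shows "quotient_graph (W, S - A) P = quotient_graph (W, S) P"
proof (rule graph_eqI)
  have between: "{a, b} \<notin> A" if "C \<in> P" "D \<in> P" "C \<noteq> D" "a \<in> C" "b \<in> D" for C D a b
  proof
    assume "{a, b} \<in> A"
    then obtain E where "E \<in> P" "a \<in> E" "b \<in> E"
      using A by blast
    then have "E = C" "E = D"
      using that partition_onD2[OF P] by (auto dest: disjointD)
    with \<open>C \<noteq> D\<close> show False
      by simp
  qed
  show "edges (quotient_graph (W, S - A) P) = edges (quotient_graph (W, S) P)"
  proof
    show "edges (quotient_graph (W, S - A) P) \<subseteq> edges (quotient_graph (W, S) P)"
      unfolding edges_quotient_graph by fastforce
  next
    show "edges (quotient_graph (W, S) P) \<subseteq> edges (quotient_graph (W, S - A) P)"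
    proof
      fix e assume "e \<in> edges (quotient_graph (W, S) P)"
      then obtain C D a b where e: "e = {C, D}" "C \<in> P" "D \<in> P" "C \<noteq> D" "a \<in> C" "b \<in> D"
        "{a, b} \<in> S"
        unfolding edges_quotient_graph by auto
      then have "{a, b} \<in> S - A"
        using between by simp
      with e show "e \<in> edges (quotient_graph (W, S - A) P)"
        unfolding edges_quotient_graph by auto
    qed
  qed
qed simp

lemma graph_iso_quotient_singletons:
  assumes "\<forall>e\<in>edges F. card e = 2"
  shows "graph_iso F (quotient_graph F ((\<lambda>v. {v}) ` verts F))"
  unfolding graph_iso_def
proof (intro exI conjI ballI)
  show "bij_betw (\<lambda>v. {v}) (verts F) (verts (quotient_graph F ((\<lambda>v. {v}) ` verts F)))"
    by (simp add: bij_betw_def)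
  fix u v assume "u \<in> verts F" "v \<in> verts F"
  moreover have "u \<noteq> v" if "{u, v} \<in> edges F"
    using assms that by fastforce
  ultimately show "{u, v} \<in> edges F \<longleftrightarrow> {{u}, {v}} \<in> edges (quotient_graph F ((\<lambda>v. {v}) ` verts F))"
    unfolding edges_quotient_graph by (auto simp: doubleton_eq_iff insert_commute)
qed

lemma subgraph_quotient_graph:
  "E' \<subseteq> edges F \<Longrightarrow> subgraph (quotient_graph (verts F, E') P) (quotient_graph F P)"
  unfolding subgraph_def edges_quotient_graph by fastforce

definition connected_by :: "'a set \<Rightarrow> 'a set set \<Rightarrow> ('a \<times> 'a) set" where
  "connected_by V A = {(x, y). x \<in> V \<and> y \<in> V \<and> (x, y) \<in> {(u, v). {u, v} \<in> A}\<^sup>*}"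

definition components :: "'a set \<Rightarrow> 'a set set \<Rightarrow> 'a set set" where
  "components V A = V // connected_by V A"

definition component :: "'a set \<Rightarrow> 'a set set \<Rightarrow> 'a \<Rightarrow> 'a set" where
  "component V A x = connected_by V A `` {x}"

lemma equiv_connected_by: "equiv V (connected_by V A)"
proof (rule equivI)
  have "sym {(u, v). {u, v} \<in> A}"
    by (auto simp: sym_def insert_commute)
  from symD[OF sym_rtrancl[OF this]] show "sym (connected_by V A)"
    unfolding connected_by_def sym_def by blast
  show "trans (connected_by V A)"
    unfolding connected_by_def by (auto simp: trans_def)
qed (auto simp: connected_by_def refl_on_def)

lemma partition_on_components: "partition_on V (components V A)"
  unfolding components_def by (rule partition_on_quotient[OF equiv_connected_by])

lemma components_eq_image: "components V A = component V A ` V"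
  by (auto simp: components_def component_def quotient_def)

lemma finite_components: "finite V \<Longrightarrow> finite (components V A)"
  by (simp add: components_eq_image)

lemma component_in_components: "x \<in> V \<Longrightarrow> component V A x \<in> components V A"
  by (simp add: components_eq_image)

lemma mem_component_self: "x \<in> V \<Longrightarrow> x \<in> component V A x"
  unfolding component_def by (rule equiv_class_self[OF equiv_connected_by])

lemma component_eq_iff:
  "x \<in> V \<Longrightarrow> y \<in> V \<Longrightarrow> component V A x = component V A y \<longleftrightarrow> (x, y) \<in> connected_by V A"
  unfolding component_def by (rule eq_equiv_class_iff[OF equiv_connected_by])

lemma component_eq_if_mem:
  assumes "C \<in> components V A" "x \<in> C"
  shows "component V A x = C"
proof -
  obtain y where y: "y \<in> V" "C = component V A y"
    using assms(1) by (auto simp: components_eq_image)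
  then have "(y, x) \<in> connected_by V A"
    using assms(2) by (simp add: component_def)
  with y(2) show ?thesis
    unfolding component_def by (simp add: equiv_class_eq[OF equiv_connected_by])
qed

lemma components_subset: "C \<in> components V A \<Longrightarrow> C \<subseteq> V"
  unfolding components_def by (rule in_quotient_imp_subset[OF equiv_connected_by])

lemma connected_by_edge: "{u, v} \<in> A \<Longrightarrow> u \<in> V \<Longrightarrow> v \<in> V \<Longrightarrow> (u, v) \<in> connected_by V A"
  unfolding connected_by_def by auto

lemma connected_by_imp_eq:
  assumes "\<And>u v. {u, v} \<in> A \<Longrightarrow> f u = f v" "(x, y) \<in> connected_by V A"
  shows "f x = f y"
proof -
  have "(x, y) \<in> {(u, v). {u, v} \<in> A}\<^sup>*"
    using assms(2) by (simp add: connected_by_def)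
  then show ?thesis
  proof (induction rule: rtrancl_induct)
    case (step y z)
    then show ?case
      using assms(1)[of y z] by simp
  qed simp
qed

lemma doubleton_subset_component:
  "{u, v} \<in> A \<Longrightarrow> u \<in> V \<Longrightarrow> v \<in> V \<Longrightarrow> {u, v} \<subseteq> component V A u"
  using connected_by_edge[of u v A V] mem_component_self[of u V A] by (simp add: component_def)

lemma components_empty: "components V {} = (\<lambda>v. {v}) ` V"
proof -
  have "connected_by V {} = Id_on V"
    by (auto simp: connected_by_def)
  then show ?thesis
    by (auto simp: components_eq_image component_def)
qed

lemma card_components_less:
  assumes V: "finite V" and A: "\<forall>e\<in>A. e \<subseteq> V \<and> card e = 2" "A \<noteq> {}"
  shows "card (components V A) < card V"
proof -
  obtain u v where uv: "{u, v} \<in> A" "u \<noteq> v" "u \<in> V" "v \<in> V"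
    using A by (metis all_not_in_conv card_2_iff insert_subset)
  then have "component V A u = component V A v"
    by (simp add: component_eq_iff connected_by_edge)
  with uv have "\<not> inj_on (component V A) V"
    by (meson inj_onD)
  then show ?thesis
    unfolding components_eq_image
    using V card_image_le eq_card_imp_inj_on le_neq_implies_less by blast
qed

lemma contraction_partition_components:
  assumes "A \<subseteq> S" "\<forall>e\<in>A. e \<subseteq> V"
  shows "contraction_partition (V, S) (components V A)"
  unfolding contraction_partition_def
proof (intro conjI ballI)
  show "partition_on (verts (V, S)) (components V A)"
    by (simp add: partition_on_components)
  fix C assume C: "C \<in> components V A"
  let ?R = "{(x, y). x \<in> C \<and> y \<in> C \<and> {x, y} \<in> edges (V, S)}"
  have "(u, z) \<in> ?R\<^sup>* \<and> z \<in> C" if u: "u \<in> C" and uz: "(u, z) \<in> {(x, y). {x, y} \<in> A}\<^sup>*" for u z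
    using uz
  proof (induction rule: rtrancl_induct)
    case (step y z)
    then have yz: "{y, z} \<in> A" "y \<in> V" "z \<in> V"
      using assms(2) by auto
    have "component V A y = C"
      using component_eq_if_mem[OF C] step.IH by blast
    moreover have "component V A y = component V A z"
      using component_eq_iff[OF yz(2,3)] connected_by_edge[OF yz] by blast
    ultimately have "component V A z = C"
      by simp
    then have "z \<in> C"
      using mem_component_self[OF yz(3), of A] by simp
    with step yz(1) assms(1) show ?case
      by (auto intro: rtrancl_into_rtrancl)
  qed (simp add: u)
  moreover have "(u, w) \<in> {(x, y). {x, y} \<in> A}\<^sup>*" if "u \<in> C" "w \<in> C" for u w
  proof -
    have "component V A u = component V A w"
      using that component_eq_if_mem[OF C] by simp
    moreover have "u \<in> V" "w \<in> V"
      using that components_subset[OF C] by auto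
    ultimately have "(u, w) \<in> connected_by V A"
      by (simp add: component_eq_iff)
    then show ?thesis
      by (simp add: connected_by_def)
  qed
  ultimately show "induced_connected (V, S) C"
    unfolding induced_connected_def by blast
qed

lemma connected_by_blocks:
  assumes P: "contraction_partition K P"
  shows "connected_by (verts K) {e\<in>edges K. \<exists>C\<in>P. e \<subseteq> C} = {(x, y). \<exists>C\<in>P. x \<in> C \<and> y \<in> C}"
proof -
  let ?V = "verts K" and ?A = "{e\<in>edges K. \<exists>C\<in>P. e \<subseteq> C}"
  have part: "partition_on ?V P" and conn: "\<forall>C\<in>P. induced_connected K C"
    using P unfolding contraction_partition_def by auto
  have stays: "(x, y) \<in> {(u, v). {u, v} \<in> ?A}\<^sup>* \<Longrightarrow> x \<in> C \<Longrightarrow> C \<in> P \<Longrightarrow> y \<in> C" for x y C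
  proof (induction rule: rtrancl_induct)
    case (step y z)
    then obtain D where "D \<in> P" "{y, z} \<subseteq> D"
      by auto
    with step partition_onD2[OF part] show ?case
      by (metis disjointD disjoint_iff insert_subset)
  qed
  have reach: "(x, y) \<in> {(u, v). {u, v} \<in> ?A}\<^sup>*" if "C \<in> P" "x \<in> C" "y \<in> C" for x y C
  proof -
    have "(x, y) \<in> {(u, v). u \<in> C \<and> v \<in> C \<and> {u, v} \<in> edges K}\<^sup>*"
      using conn that unfolding induced_connected_def by blast
    moreover have "{(u, v). u \<in> C \<and> v \<in> C \<and> {u, v} \<in> edges K} \<subseteq> {(u, v). {u, v} \<in> ?A}"
      using that(1) by auto
    ultimately show ?thesis
      using rtrancl_mono by blast
  qed
  show ?thesis
  proof (intro equalityI subsetI; clarify)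
    fix x y assume "(x, y) \<in> connected_by ?V ?A"
    then have xy: "x \<in> ?V" "(x, y) \<in> {(u, v). {u, v} \<in> ?A}\<^sup>*"
      by (simp_all add: connected_by_def)
    then obtain C where C: "C \<in> P" "x \<in> C"
      using partition_onD1[OF part] by auto
    with stays[OF xy(2) C(2,1)] show "\<exists>C\<in>P. x \<in> C \<and> y \<in> C"
      by blast
  next
    fix x y C assume "C \<in> P" "x \<in> C" "y \<in> C"
    moreover have "C \<subseteq> ?V"
      using \<open>C \<in> P\<close> partition_onD1[OF part] by auto
    ultimately show "(x, y) \<in> connected_by ?V ?A"
      using reach by (auto simp: connected_by_def)
  qed
qed

lemma components_contraction_partition:
  assumes "contraction_partition K P"
  shows "components (verts K) {e\<in>edges K. \<exists>C\<in>P. e \<subseteq> C} = P"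
  using assms partition_on_eq_quotient[of "verts K" P]
  by (simp add: components_def connected_by_blocks contraction_partition_def)

section \<open>Homomorphisms into the complement\<close>

lemma prod_of_bool:
  "finite E \<Longrightarrow> (\<Prod>e\<in>E. of_bool (P e) :: 'a :: comm_semiring_1) = of_bool (\<forall>e\<in>E. P e)"
  by (induction E rule: finite_induct) auto

lemma prod_one_minus_minus_expand:
  fixes x y :: "'e \<Rightarrow> 'a :: comm_ring_1"
  assumes E: "finite E"
  shows "(\<Prod>e\<in>E. 1 - x e - y e) =
    (\<Sum>(S, A)\<in>Sigma (Pow E) Pow. (-1) ^ card S * ((\<Prod>e\<in>A. x e) * (\<Prod>e\<in>S - A. y e)))"
proof -
  have "(\<Prod>e\<in>E. 1 - x e - y e) = (\<Prod>e\<in>E. - (x e + y e) + 1)"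
    by (simp add: algebra_simps)
  also have "\<dots> = (\<Sum>S\<in>Pow E. (-1) ^ card S * (\<Prod>e\<in>S. x e + y e))"
    unfolding prod_add[OF E] prod_uminus by simp
  also have "\<dots> = (\<Sum>S\<in>Pow E. \<Sum>A\<in>Pow S. (-1) ^ card S * ((\<Prod>e\<in>A. x e) * (\<Prod>e\<in>S - A. y e)))"
    using E by (intro sum.cong refl) (simp add: prod_add sum_distrib_left finite_subset)
  also have "\<dots> = (\<Sum>(S, A)\<in>Sigma (Pow E) Pow. (-1) ^ card S * ((\<Prod>e\<in>A. x e) * (\<Prod>e\<in>S - A. y e)))"
    using E by (intro sum.Sigma) (auto intro: finite_subset)
  finally show ?thesis .
qed

lemma verts_complement [simp]: "verts (complement G) = verts G"
  by (simp add: complement_def verts_def)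

lemma edges_complement: "edges (complement G) = {e. e \<subseteq> verts G \<and> card e = 2} - edges G"
  by (simp add: complement_def edges_def verts_def)

lemma simple_graph_complement: "simple_graph G \<Longrightarrow> simple_graph (complement G)"
  unfolding simple_graph_def by (simp add: edges_complement)

lemma complement_complement: "simple_graph G \<Longrightarrow> complement (complement G) = G"
  by (rule graph_eqI) (auto simp: edges_complement simple_graph_def)

lemma of_bool_image_in_edges_complement:
  assumes K: "simple_graph K" and G: "simple_graph G" and f: "f \<in> verts K \<rightarrow> verts G"
    and e: "e \<in> edges K"
  shows "(of_bool (f ` e \<in> edges (complement G)) :: int) =
         1 - of_bool (card (f ` e) = 1) - of_bool (f ` e \<in> edges G)"
proof -
  obtain u v where uv: "e = {u, v}" "u \<in> verts K" "v \<in> verts K"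
    using simple_graph_edgeE[OF K e] by metis
  then have "f ` e \<subseteq> verts G"
    using f by auto
  moreover have "card (f ` e) = 1 \<or> card (f ` e) = 2"
    using uv by (auto simp: card_insert_if)
  moreover have "f ` e \<notin> edges G" if "card (f ` e) = 1"
    using that simple_graph_card_edge[OF G] by force
  ultimately show ?thesis
    by (auto simp: edges_complement)
qed

definition components_separate :: "'a set \<Rightarrow> 'a set set \<Rightarrow> 'a set set \<Rightarrow> bool" where
  "components_separate V A B \<longleftrightarrow> (\<forall>e\<in>B. \<forall>C\<in>components V A. \<not> e \<subseteq> C)"

text \<open>\<open>delete_contract K (S, A)\<close> arises from \<open>K\<close> by deleting the edges outside \<open>S\<close> and
  contracting those in \<open>A\<close>. In \<open>complement_coeff\<close> the terms vanish in which an edge of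
  \<open>S - A\<close> lies inside a component of \<open>A\<close>: no map collapsing \<open>A\<close> sends it to an edge.\<close>

definition delete_contract :: "'a graph \<Rightarrow> 'a set set \<times> 'a set set \<Rightarrow> 'a set graph" where
  "delete_contract K p = quotient_graph (verts K, fst p) (components (verts K) (snd p))"

lemma simple_graph_delete_contract: "simple_graph K \<Longrightarrow> simple_graph (delete_contract K p)"
  unfolding delete_contract_def
  by (simp add: simple_graph_quotient_graph finite_components simple_graph_finite_verts)

lemma finite_edge_pairs: "simple_graph K \<Longrightarrow> finite (Sigma (Pow (edges K)) Pow)"
  by (intro finite_SigmaI) (auto intro: finite_subset dest: simple_graph_finite_edges)

lemma components_separate_empty: "\<forall>e\<in>B. card e = 2 \<Longrightarrow> components_separate V {} B"
  by (auto simp: components_separate_def components_empty subset_singleton_iff)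

lemma graph_iso_delete_contract_empty:
  assumes "simple_graph K" "S \<subseteq> edges K"
  shows "graph_iso (verts K, S) (delete_contract K (S, {}))"
proof -
  have "\<forall>e\<in>edges (verts K, S). card e = 2"
    using assms(2) simple_graph_card_edge[OF assms(1)] by auto
  from graph_iso_quotient_singletons[OF this] show ?thesis
    by (simp add: delete_contract_def components_empty)
qed

lemma delete_contract_iso_spanning:
  assumes K: "simple_graph K" and SA: "(S, A) \<in> Sigma (Pow (edges K)) Pow" and E': "E' \<subseteq> edges K"
    and iso: "graph_iso (delete_contract K (S, A)) (delete_contract K (E', {}))"
  shows "A = {}" and "card S = card E'"
proof -
  let ?V = "verts K"
  have "card (components ?V A) = card (components ?V {})"
    using card_verts_iso[OF iso] by (simp add: delete_contract_def)
  moreover have "\<forall>e\<in>A. e \<subseteq> ?V \<and> card e = 2"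
    using SA simple_graph_edge_subset[OF K] simple_graph_card_edge[OF K] by blast
  ultimately show "A = {}"
    using card_components_less[OF simple_graph_finite_verts[OF K], of A]
    by (auto simp: components_empty card_image)
  have "graph_iso (?V, S) (?V, E')"
    using graph_iso_trans[OF graph_iso_trans[OF graph_iso_delete_contract_empty[OF K]
          iso[unfolded \<open>A = {}\<close>]] graph_iso_sym[OF graph_iso_delete_contract_empty[OF K E']]] SA
    by simp
  moreover have "simple_graph (?V, S)" "simple_graph (?V, E')"
    using simple_graph_subgraph[OF K subgraph_spanning[OF K]] SA E' by auto
  ultimately show "card S = card E'"
    using card_edges_iso by fastforce
qed

definition collapsing_maps :: "'a set \<Rightarrow> 'a set set \<Rightarrow> 'a set set \<Rightarrow> 'b graph \<Rightarrow> ('a \<Rightarrow> 'b) set" where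
  "collapsing_maps V A B G =
     {f \<in> V \<rightarrow>\<^sub>E verts G. (\<forall>e\<in>A. card (f ` e) = 1) \<and> (\<forall>e\<in>B. f ` e \<in> edges G)}"

lemma collapsing_map_component:
  assumes "f \<in> collapsing_maps V A B G" "x \<in> V" "y \<in> component V A x"
  shows "f y = f x"
proof -
  have "f u = f v" if "{u, v} \<in> A" for u v
    using assms(1) that by (auto simp: collapsing_maps_def card_insert_if split: if_splits)
  moreover have "(x, y) \<in> connected_by V A"
    using assms(3) by (simp add: component_def)
  ultimately show ?thesis
    by (metis connected_by_imp_eq)
qed

lemma collapsing_maps_empty:
  assumes G: "simple_graph G" and B: "\<forall>e\<in>B. card e = 2"
    and not_sep: "\<not> components_separate V A B"
  shows "collapsing_maps V A B G = {}"
proof (rule ccontr)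
  assume "collapsing_maps V A B G \<noteq> {}"
  then obtain f where f: "f \<in> collapsing_maps V A B G"
    by blast
  obtain e C where e: "e \<in> B" "C \<in> components V A" "e \<subseteq> C"
    using not_sep unfolding components_separate_def by blast
  obtain x where x: "x \<in> V" "C = component V A x"
    using e(2) by (auto simp: components_eq_image)
  have "f ` e = {f x}"
    using B e x collapsing_map_component[OF f x(1)] by (fastforce simp: card_2_iff)
  moreover have "f ` e \<in> edges G"
    using f e(1) by (simp add: collapsing_maps_def)
  ultimately show False
    using simple_graph_card_edge[OF G] by fastforce
qed

lemma collapsing_map_some_eq:
  assumes f: "f \<in> collapsing_maps V A B G" and C: "C \<in> components V A" "a \<in> C"
  shows "f (SOME x. x \<in> C) = f a"
proof -
  have "a \<in> V"
    using C components_subset by blast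
  moreover have "(SOME x. x \<in> C) \<in> component V A a"
    using someI[of "\<lambda>x. x \<in> C", OF C(2)] component_eq_if_mem[OF C] by simp
  ultimately show ?thesis
    using collapsing_map_component[OF f] by simp
qed

lemma restrict_component_in_homs:
  assumes sep: "components_separate V A B"
  shows "restrict (component V A) V \<in> homs (V, B) (quotient_graph (V, B) (components V A))"
proof -
  have "{component V A u, component V A v} \<in> edges (quotient_graph (V, B) (components V A))"
    if uv: "{u, v} \<in> B" "u \<in> V" "v \<in> V" for u v
  proof -
    have "component V A u \<noteq> component V A v"
    proof
      assume "component V A u = component V A v"
      then have "{u, v} \<subseteq> component V A u"
        using mem_component_self[OF uv(2), of A] mem_component_self[OF uv(3), of A] by auto
      then show False
        using sep uv(1) component_in_components[OF uv(2)]
        unfolding components_separate_def by blast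
    qed
    then show ?thesis
      using uv mem_component_self[OF uv(2), of A] mem_component_self[OF uv(3), of A]
        component_in_components[OF uv(2)] component_in_components[OF uv(3)]
      unfolding edges_quotient_graph edges_pair by blast
  qed
  then show ?thesis
    unfolding homs_def by (auto simp: component_in_components)
qed

lemma restrict_component_onto:
  "restrict (component V A) V ` verts (V, B) = verts (quotient_graph (V, B) (components V A))"
  by (simp add: components_eq_image)

lemma compose_component_in_collapsing_maps:
  assumes V: "finite V" and A: "\<forall>e\<in>A. e \<subseteq> V \<and> card e = 2" and B: "\<forall>e\<in>B. e \<subseteq> V \<and> card e = 2"
    and sep: "components_separate V A B" and h: "h \<in> homs (quotient_graph (V, B) (components V A)) G"
  shows "restrict (h \<circ> restrict (component V A) V) V \<in> collapsing_maps V A B G"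
proof -
  let ?f = "restrict (h \<circ> restrict (component V A) V) V"
  have "card (?f ` e) = 1" if e: "e \<in> A" for e
  proof -
    obtain u v where uv: "e = {u, v}" "u \<in> V" "v \<in> V"
      using A e by (auto simp: card_2_iff)
    then have "component V A u = component V A v"
      using e component_eq_iff[OF uv(2,3)] connected_by_edge by simp
    with uv show ?thesis
      by simp
  qed
  moreover have "simple_graph (V, B)"
    using V B by (simp add: simple_graph_def)
  moreover have "?f \<in> homs (V, B) G"
    using homs_precompose[OF restrict_component_in_homs[OF sep] restrict_component_onto, of G] h
    by auto
  ultimately show ?thesis
    by (simp add: collapsing_maps_def homs_simple)
qed

lemma representative_map_in_homs:
  assumes f: "f \<in> collapsing_maps V A B G"
  shows "restrict (\<lambda>C. f (SOME x. x \<in> C)) (components V A)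
    \<in> homs (quotient_graph (V, B) (components V A)) G"
proof -
  let ?P = "components V A"
  have "{f (SOME x. x \<in> C), f (SOME x. x \<in> D)} \<in> edges G"
    if CD: "{C, D} \<in> edges (quotient_graph (V, B) ?P)" for C D
  proof -
    obtain C' D' a b where "{C, D} = {C', D'}" "C' \<in> ?P" "D' \<in> ?P" "a \<in> C'" "b \<in> D'" "{a, b} \<in> B"
      using CD unfolding edges_quotient_graph edges_pair mem_Collect_eq by (elim exE conjE bexE) blast
    moreover have "f ` {a, b} \<in> edges G"
      using f \<open>{a, b} \<in> B\<close> unfolding collapsing_maps_def by blast
    ultimately show ?thesis
      using collapsing_map_some_eq[OF f] by (auto simp: doubleton_eq_iff insert_commute)
  qed
  moreover have "f (SOME x. x \<in> C) \<in> verts G" if "C \<in> ?P" for C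
    using f components_subset[OF that] someI_ex[of "\<lambda>x. x \<in> C"] that
    by (auto simp: collapsing_maps_def components_eq_image intro: mem_component_self)
  ultimately show ?thesis
    unfolding homs_def by auto
qed

lemma inj_on_representative_map:
  "inj_on (\<lambda>f. restrict (\<lambda>C. f (SOME x. x \<in> C)) (components V A)) (collapsing_maps V A B G)"
proof (rule inj_onI)
  fix f g assume f: "f \<in> collapsing_maps V A B G" and g: "g \<in> collapsing_maps V A B G"
    and eq: "restrict (\<lambda>C. f (SOME x. x \<in> C)) (components V A)
           = restrict (\<lambda>C. g (SOME x. x \<in> C)) (components V A)"
  have "f x = g x" if "x \<in> V" for x
    using collapsing_map_some_eq[OF f component_in_components[OF that] mem_component_self[OF that]]
      collapsing_map_some_eq[OF g component_in_components[OF that] mem_component_self[OF that]]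
      fun_cong[OF eq, of "component V A x"] component_in_components[OF that]
    by simp
  moreover have "f \<in> extensional V" "g \<in> extensional V"
    using f g by (simp_all add: collapsing_maps_def PiE_iff)
  ultimately show "f = g"
    using extensionalityI by blast
qed

text \<open>Maps collapsing the edges of \<open>A\<close> factor through the components of \<open>A\<close>: composing with the
  component map and evaluating at representatives give injections in both directions.\<close>

lemma card_collapsing_maps:
  assumes V: "finite V" and A: "\<forall>e\<in>A. e \<subseteq> V \<and> card e = 2" and B: "\<forall>e\<in>B. e \<subseteq> V \<and> card e = 2"
    and sep: "components_separate V A B"
  shows "card (collapsing_maps V A B G) = hom (quotient_graph (V, B) (components V A)) G"
proof -
  have inj: "inj_on (\<lambda>h. restrict (h \<circ> restrict (component V A) V) V)
      (homs (quotient_graph (V, B) (components V A)) G)"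
    using inj_on_homs_precompose[OF restrict_component_in_homs[OF sep] restrict_component_onto]
    by simp
  show ?thesis
    unfolding hom_def
    by (rule card_eq_by_injections[OF inj_on_representative_map _ inj])
      (auto intro: representative_map_in_homs compose_component_in_collapsing_maps[OF V A B sep])
qed

lemma hom_complement_eq_sum_collapsing_maps:
  assumes K: "simple_graph K" and G: "simple_graph G"
  shows "int (hom K (complement G)) = (\<Sum>(S, A)\<in>Sigma (Pow (edges K)) Pow.
           (-1) ^ card S * int (card (collapsing_maps (verts K) A (S - A) G)))"
proof -
  let ?V = "verts K" and ?E = "edges K"
  let ?x = "\<lambda>f e. of_bool (card (f ` e) = 1) :: int"
  let ?y = "\<lambda>f e. of_bool (f ` e \<in> edges G) :: int"
  have fin: "finite (?V \<rightarrow>\<^sub>E verts G)" "finite ?E"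
    using K G by (simp_all add: finite_PiE simple_graph_finite_verts simple_graph_finite_edges)
  have "int (hom K (complement G))
      = (\<Sum>f\<in>?V \<rightarrow>\<^sub>E verts G. \<Prod>e\<in>?E. of_bool (f ` e \<in> edges (complement G)))"
    using fin by (simp add: hom_def homs_simple[OF K] prod_of_bool Int_def)
  also have "\<dots> = (\<Sum>f\<in>?V \<rightarrow>\<^sub>E verts G. \<Prod>e\<in>?E. 1 - ?x f e - ?y f e)"
    using of_bool_image_in_edges_complement[OF K G] by (intro sum.cong prod.cong refl) (auto simp: PiE_iff)
  also have "\<dots> = (\<Sum>f\<in>?V \<rightarrow>\<^sub>E verts G. \<Sum>(S, A)\<in>Sigma (Pow ?E) Pow.
                      (-1) ^ card S * ((\<Prod>e\<in>A. ?x f e) * (\<Prod>e\<in>S - A. ?y f e)))"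
    using fin(2) by (simp add: prod_one_minus_minus_expand)
  also have "\<dots> = (\<Sum>(S, A)\<in>Sigma (Pow ?E) Pow. \<Sum>f\<in>?V \<rightarrow>\<^sub>E verts G.
                      (-1) ^ card S * ((\<Prod>e\<in>A. ?x f e) * (\<Prod>e\<in>S - A. ?y f e)))"
    unfolding split_def by (rule sum.swap)
  also have "\<dots> = (\<Sum>(S, A)\<in>Sigma (Pow ?E) Pow.
                      (-1) ^ card S * int (card (collapsing_maps ?V A (S - A) G)))"
  proof (intro sum.cong refl, clarify)
    fix S A assume "S \<subseteq> ?E" "A \<subseteq> S"
    then have "finite A" "finite (S - A)"
      using fin(2) by (auto intro: finite_subset)
    then show "(\<Sum>f\<in>?V \<rightarrow>\<^sub>E verts G. (-1) ^ card S * ((\<Prod>e\<in>A. ?x f e) * (\<Prod>e\<in>S - A. ?y f e)))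
             = (-1) ^ card S * int (card (collapsing_maps ?V A (S - A) G))"
      using fin(1)
      by (simp add: sum_distrib_left[symmetric] prod_of_bool of_bool_conj[symmetric]
          collapsing_maps_def Int_def)
  qed
  finally show ?thesis .
qed

definition complement_coeff :: "'a graph \<Rightarrow> 'a set set \<times> 'a set set \<Rightarrow> int" where
  "complement_coeff K p =
     (if components_separate (verts K) (snd p) (fst p - snd p) then (-1) ^ card (fst p) else 0)"

lemma card_collapsing_maps_eq_hom_delete_contract:
  assumes K: "simple_graph K" and G: "simple_graph G" and SA: "S \<subseteq> edges K" "A \<subseteq> S"
  shows "(-1) ^ card S * int (card (collapsing_maps (verts K) A (S - A) G))
       = complement_coeff K (S, A) * int (hom (delete_contract K (S, A)) G)"
proof -
  let ?V = "verts K"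
  have edges: "\<forall>e\<in>S. e \<subseteq> ?V \<and> card e = 2"
    using SA(1) simple_graph_edge_subset[OF K] simple_graph_card_edge[OF K] by blast
  show ?thesis
  proof (cases "components_separate ?V A (S - A)")
    case True
    have "\<exists>C\<in>components ?V A. e \<subseteq> C" if "e \<in> A" for e
    proof -
      have "e \<subseteq> ?V" "card e = 2"
        using edges SA(2) that by auto
      then obtain u v where "e = {u, v}" "u \<in> ?V" "v \<in> ?V"
        by (auto simp: card_2_iff)
      then show ?thesis
        using doubleton_subset_component[of u v A ?V] component_in_components[of u ?V A] that by auto
    qed
    then have "quotient_graph (?V, S - A) (components ?V A) = delete_contract K (S, A)"
      unfolding delete_contract_def by (simp add: quotient_graph_diff[OF partition_on_components])
    moreover have "card (collapsing_maps ?V A (S - A) G)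
        = hom (quotient_graph (?V, S - A) (components ?V A)) G"
      by (rule card_collapsing_maps[OF simple_graph_finite_verts[OF K]]) (use edges SA(2) True in auto)
    ultimately show ?thesis
      using True by (simp add: complement_coeff_def)
  next
    case False
    have "\<forall>e\<in>S - A. card e = 2"
      using edges by blast
    with False have "collapsing_maps ?V A (S - A) G = {}"
      by (intro collapsing_maps_empty[OF G])
    with False show ?thesis
      by (simp add: complement_coeff_def)
  qed
qed

theorem hom_complement_expansion:
  assumes K: "simple_graph K" and G: "simple_graph G"
  shows "int (hom K (complement G)) = (\<Sum>p\<in>Sigma (Pow (edges K)) Pow.
           complement_coeff K p * int (hom (delete_contract K p) G))"
  unfolding hom_complement_eq_sum_collapsing_maps[OF K G]
  using card_collapsing_maps_eq_hom_delete_contract[OF K G] by (intro sum.cong refl) auto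

section \<open>Homomorphism distinguishing closure\<close>

lemma hom_complement_eq:
  assumes K: "simple_graph K" and G: "simple_graph G" and H: "simple_graph H"
    and minors: "\<And>p. p \<in> Sigma (Pow (edges K)) Pow \<Longrightarrow>
      hom (delete_contract K p) G = hom (delete_contract K p) H"
  shows "hom K (complement G) = hom K (complement H)"
proof -
  have "int (hom K (complement G)) = int (hom K (complement H))"
    unfolding hom_complement_expansion[OF K G] hom_complement_expansion[OF K H]
    using minors by (intro sum.cong refl) simp
  then show ?thesis
    by simp
qed

lemma natcopy_delete_contract_in_closed:
  assumes cc: "closed_contraction \<F>" and cd: "closed_deletion \<F>"
    and K: "K \<in> \<F>" "simple_graph K" and p: "p \<in> Sigma (Pow (edges K)) Pow"
  shows "natcopy (delete_contract K p) \<in> \<F>"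
proof -
  obtain S A where SA: "p = (S, A)" "S \<subseteq> edges K" "A \<subseteq> S"
    using p by auto
  have "(verts K, S) \<in> \<F>"
    using cd K(1) SA(2) unfolding closed_deletion_def by blast
  moreover have "contraction_partition (verts K, S) (components (verts K) A)"
    using SA K(2) by (intro contraction_partition_components) (auto dest: simple_graph_edge_subset)
  moreover have "graph_iso (natcopy (delete_contract K p)) (delete_contract K p)"
    by (rule graph_iso_sym[OF graph_iso_natcopy[OF simple_graph_delete_contract[OF K(2)]]])
  ultimately have "contracts_to (verts K, S) (natcopy (delete_contract K p))"
    unfolding contracts_to_def delete_contract_def SA(1) by auto
  with \<open>(verts K, S) \<in> \<F>\<close> show ?thesis
    using cc simple_graph_natcopy[OF simple_graph_delete_contract[OF K(2)]]
    unfolding closed_contraction_def by blast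
qed

lemma hom_equiv_complement_if_closed:
  assumes simple: "\<forall>F\<in>\<F>. simple_graph F" and cc: "closed_contraction \<F>" and cd: "closed_deletion \<F>"
    and G: "simple_graph G" and H: "simple_graph H" and GH: "hom_equiv \<F> G H"
  shows "hom_equiv \<F> (complement G) (complement H)"
  unfolding hom_equiv_def
proof
  fix K assume K: "K \<in> \<F>"
  have "hom (delete_contract K p) G = hom (delete_contract K p) H"
    if "p \<in> Sigma (Pow (edges K)) Pow" for p
    using GH natcopy_delete_contract_in_closed[OF cc cd K simple[rule_format, OF K] that]
      hom_iso_left[OF graph_iso_natcopy[OF simple_graph_delete_contract[OF simple[rule_format, OF K]]]]
    unfolding hom_equiv_def by metis
  then show "hom K (complement G) = hom K (complement H)"
    by (rule hom_complement_eq[OF simple[rule_format, OF K] G H])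
qed

lemma hom_equiv_complement_iff:
  fixes G H :: "'b graph"
  assumes compl: "\<And>G H :: 'b graph. simple_graph G \<Longrightarrow> simple_graph H \<Longrightarrow> hom_equiv \<F> G H
      \<Longrightarrow> hom_equiv \<F> (complement G) (complement H)"
    and G: "simple_graph G" and H: "simple_graph H"
  shows "hom_equiv \<F> G H \<longleftrightarrow> hom_equiv \<F> (complement G) (complement H)"
  using compl[OF G H] compl[OF simple_graph_complement[OF G] simple_graph_complement[OF H]]
  by (auto simp: complement_complement G H)

lemma hom_equiv_cl_iff:
  fixes G H :: "nat graph"
  assumes "\<forall>F\<in>\<F>. simple_graph F" "simple_graph G" "simple_graph H"
  shows "hom_equiv (cl \<F>) G H \<longleftrightarrow> hom_equiv \<F> G H"
proof
  assume "hom_equiv (cl \<F>) G H"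
  moreover have "\<F> \<subseteq> cl \<F>"
    using assms(1) unfolding cl_def hom_equiv_def by blast
  ultimately show "hom_equiv \<F> G H"
    unfolding hom_equiv_def by blast
next
  assume "hom_equiv \<F> G H"
  with assms(2,3) show "hom_equiv (cl \<F>) G H"
    unfolding hom_equiv_def cl_def by blast
qed

lemma closed_contraction_if_minor_closed:
  assumes "minor_closed \<C>"
  shows "closed_contraction \<C>"
  unfolding closed_contraction_def
proof (intro ballI allI impI)
  fix F F' :: "nat graph" assume "F \<in> \<C>" "simple_graph F'" "contracts_to F F'"
  moreover have "subgraph (quotient_graph F P) (quotient_graph F P)" for P
    using subgraph_quotient_graph[of "edges F" F P] by simp
  ultimately show "F' \<in> \<C>"
    using assms unfolding minor_closed_def minor_def contracts_to_def by blast
qed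

lemma closed_deletion_if_minor_closed:
  assumes mc: "minor_closed \<C>" and simple: "\<forall>F\<in>\<C>. simple_graph F"
  shows "closed_deletion \<C>"
  unfolding closed_deletion_def
proof (intro ballI allI impI)
  fix F :: "nat graph" and E' assume F: "F \<in> \<C>" and E': "E' \<subseteq> edges F"
  let ?V = "verts F" and ?P = "components (verts F) {}"
  have F_simple: "simple_graph F"
    using simple F by blast
  have "contraction_partition F ?P"
    using contraction_partition_components[of "{}" "edges F" ?V] by simp
  moreover have "subgraph (quotient_graph (?V, E') ?P) (quotient_graph F ?P)"
    using E' by (rule subgraph_quotient_graph)
  moreover have "graph_iso (?V, E') (quotient_graph (?V, E') ?P)"
    using graph_iso_quotient_singletons[of "(?V, E')"] E' simple_graph_card_edge[OF F_simple]
    by (auto simp: components_empty)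
  ultimately have "minor (?V, E') F"
    unfolding minor_def by blast
  then show "(?V, E') \<in> \<C>"
    using mc F simple_graph_subgraph[OF F_simple subgraph_spanning[OF F_simple E']]
    unfolding minor_closed_def by blast
qed

context
  fixes \<F> :: "nat graph set"
  assumes compl: "\<And>G H :: nat graph. simple_graph G \<Longrightarrow> simple_graph H \<Longrightarrow> hom_equiv \<F> G H
    \<Longrightarrow> hom_equiv \<F> (complement G) (complement H)"
begin

lemma hom_invariant_complement_expansion:
  assumes K: "simple_graph K" and inv: "hom_invariant \<F> (hom K)"
  shows "hom_invariant \<F> (\<lambda>G. \<Sum>p\<in>Sigma (Pow (edges K)) Pow.
           complement_coeff K p * int (hom (delete_contract K p) G))"
proof (rule hom_invariantI)
  fix G H :: "nat graph" assume GH: "simple_graph G" "simple_graph H" "hom_equiv \<F> G H"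
  have "hom K (complement G) = hom K (complement H)"
    using hom_invariantD[OF inv simple_graph_complement[OF GH(1)] simple_graph_complement[OF GH(2)]
        compl[OF GH]] .
  then show "(\<Sum>p\<in>Sigma (Pow (edges K)) Pow. complement_coeff K p * int (hom (delete_contract K p) G))
           = (\<Sum>p\<in>Sigma (Pow (edges K)) Pow. complement_coeff K p * int (hom (delete_contract K p) H))"
    unfolding hom_complement_expansion[OF K GH(1), symmetric] hom_complement_expansion[OF K GH(2), symmetric]
    by simp
qed

lemma hom_invariant_spanning_subgraph:
  assumes K: "simple_graph K" and inv: "hom_invariant \<F> (hom K)" and E': "E' \<subseteq> edges K"
  shows "hom_invariant \<F> (hom (verts K, E'))"
proof -
  let ?j = "(E', {})"
  have coeff_j: "complement_coeff K ?j = (-1) ^ card E'"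
    using E' simple_graph_card_edge[OF K]
    by (auto simp: complement_coeff_def intro!: components_separate_empty)
  have "\<forall>p\<in>Sigma (Pow (edges K)) Pow. graph_iso (delete_contract K p) (delete_contract K ?j) \<longrightarrow>
      complement_coeff K p = 0 \<or> complement_coeff K p = complement_coeff K ?j"
    using delete_contract_iso_spanning[OF K _ E'] unfolding coeff_j
    by (auto simp: complement_coeff_def)
  then have "hom_invariant \<F> (hom (delete_contract K ?j))"
    using E' coeff_j simple_graph_delete_contract[OF K]
    by (intro hom_invariant_of_lincomb_single_sign[OF finite_edge_pairs[OF K] _
          hom_invariant_complement_expansion[OF K inv]]) auto
  moreover have "hom (verts K, E') = (hom (delete_contract K ?j) :: nat graph \<Rightarrow> nat)"
    using hom_iso_left[OF graph_iso_delete_contract_empty[OF K E']] by (rule ext)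
  ultimately show ?thesis
    by simp
qed

lemma hom_invariant_card_verts:
  assumes K: "simple_graph K" and inv: "hom_invariant \<F> (hom K)" and V: "verts K \<noteq> {}"
  shows "hom_invariant \<F> (\<lambda>G. card (verts G))"
proof (rule hom_invariantI)
  have fin: "finite (verts K)"
    using K by (rule simple_graph_finite_verts)
  have discrete: "hom (verts K, {}) G = card (verts G) ^ card (verts K)" for G :: "nat graph"
    using hom_add_isolated_verts[OF fin, of "{}" "{}" G] by (simp add: hom_empty_graph)
  fix G H :: "nat graph" assume "simple_graph G" "simple_graph H" "hom_equiv \<F> G H"
  then have "hom (verts K, {}) G = hom (verts K, {}) H"
    by (intro hom_invariantD[OF hom_invariant_spanning_subgraph[OF K inv]]) auto
  moreover have "card (verts K) > 0"
    using fin V by (simp add: card_gt_0_iff)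
  ultimately show "card (verts G) = card (verts H)"
    by (simp add: discrete power_eq_iff_eq_base)
qed

lemma hom_invariant_subgraph:
  assumes K: "simple_graph K" and inv: "hom_invariant \<F> (hom K)" and S: "subgraph S K"
  shows "hom_invariant \<F> (hom S)"
proof (rule hom_invariantI)
  let ?V = "verts K" and ?W = "verts S" and ?D = "edges S"
  have WV: "?W \<subseteq> ?V" and DE: "?D \<subseteq> edges K" and DW: "\<forall>e\<in>?D. e \<subseteq> ?W"
    using S unfolding subgraph_def by auto
  have isolated: "hom (?V, ?D) G = card (verts G) ^ card (?V - ?W) * hom S G" for G :: "nat graph"
    using hom_add_isolated_verts[OF simple_graph_finite_verts[OF K] WV DW, of G] by simp
  fix G H :: "nat graph" assume GH: "simple_graph G" "simple_graph H" "hom_equiv \<F> G H"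
  have hom_eq: "hom (?V, ?D) G = hom (?V, ?D) H"
    using hom_invariantD[OF hom_invariant_spanning_subgraph[OF K inv DE] GH] .
  show "hom S G = hom S H"
  proof (cases "?W = ?V")
    case True
    then show ?thesis
      using hom_eq graph_collapse[of S] by simp
  next
    case False
    then have card_eq: "card (verts G) = card (verts H)"
      using hom_invariantD[OF hom_invariant_card_verts[OF K inv] GH] WV by auto
    show ?thesis
    proof (cases "card (verts G) = 0")
      case True
      then have "verts G = {}" "verts H = {}"
        using card_eq GH(1,2) by (simp_all add: simple_graph_finite_verts)
      then show ?thesis
        using simple_graph_no_verts[OF GH(1)] simple_graph_no_verts[OF GH(2)] by simp
    next
      case False
      then show ?thesis
        using hom_eq card_eq by (simp add: isolated)
    qed
  qed
qed

text \<open>Induction on the number of edges: the terms of the expansion that delete an edge are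
  determined by induction, and the remaining terms all carry the sign \<open>(-1) ^ card (edges K)\<close>,
  so the class of \<open>K/P\<close> has a nonzero total coefficient.\<close>

lemma hom_invariant_quotient_graph:
  assumes "simple_graph K" "hom_invariant \<F> (hom K)" "contraction_partition K P"
  shows "hom_invariant \<F> (hom (quotient_graph K P))"
  using assms
proof (induction "card (edges K)" arbitrary: K P rule: less_induct)
  case less
  note K = less.prems(1) and inv = less.prems(2) and P = less.prems(3)
  let ?V = "verts K" and ?E = "edges K" and ?I = "Sigma (Pow (edges K)) Pow"
  let ?I\<^sub>E = "{p\<in>?I. fst p = ?E}"
  let ?A = "{e\<in>?E. \<exists>C\<in>P. e \<subseteq> C}"
  let ?j = "(?E, ?A)"
  let ?\<phi> = "\<lambda>I G. \<Sum>p\<in>I. complement_coeff K p * int (hom (delete_contract K p) G)"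
  have fin: "finite ?I" "finite ?E"
    using K by (simp_all add: finite_edge_pairs simple_graph_finite_edges)
  have "hom_invariant \<F> (hom (delete_contract K p))" if p: "p \<in> ?I - ?I\<^sub>E" for p
  proof -
    obtain S A where SA: "p = (S, A)" "S \<subset> ?E" "A \<subseteq> S"
      using p by (cases p) auto
    have "card (edges (?V, S)) < card ?E"
      using SA(2) fin(2) by (simp add: psubset_card_mono)
    moreover have "simple_graph (?V, S)" "hom_invariant \<F> (hom (?V, S))"
      using SA(2) simple_graph_subgraph[OF K subgraph_spanning[OF K]]
        hom_invariant_spanning_subgraph[OF K inv] by auto
    moreover have "contraction_partition (?V, S) (components ?V A)"
      using SA(2,3) simple_graph_edge_subset[OF K]
      by (intro contraction_partition_components) auto
    ultimately show ?thesis
      using less.hyps by (simp add: SA(1) delete_contract_def)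
  qed
  then have inv_rest: "hom_invariant \<F> (?\<phi> (?I - ?I\<^sub>E))"
    by (rule hom_invariant_sum)
  have inv_all: "hom_invariant \<F> (\<lambda>G. ?\<phi> (?I - ?I\<^sub>E) G + ?\<phi> ?I\<^sub>E G)"
    using hom_invariant_complement_expansion[OF K inv] fin(1)
    by (simp add: sum.subset_diff[of ?I\<^sub>E ?I] add.commute)
  have inv_E: "hom_invariant \<F> (?\<phi> ?I\<^sub>E)"
    by (rule hom_invariant_add_cancel[OF inv_all inv_rest])
  have components: "components ?V ?A = P"
    by (rule components_contraction_partition[OF P])
  have coeff_j: "complement_coeff K ?j = (-1) ^ card ?E"
    using components by (auto simp: complement_coeff_def components_separate_def)
  have "hom_invariant \<F> (hom (delete_contract K ?j))"
    using fin(1) simple_graph_delete_contract[OF K] coeff_j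
    by (intro hom_invariant_of_lincomb_single_sign[OF _ _ inv_E])
      (auto simp: complement_coeff_def)
  moreover have "delete_contract K ?j = quotient_graph K P"
    by (simp add: delete_contract_def components)
  ultimately show ?case
    by simp
qed

lemma hom_invariant_minor:
  assumes K: "simple_graph K" and inv: "hom_invariant \<F> (hom K)" and M: "minor M K"
  shows "hom_invariant \<F> (hom M)"
proof -
  obtain P S where P: "contraction_partition K P" and S: "subgraph S (quotient_graph K P)"
    and iso: "graph_iso M S"
    using M unfolding minor_def by blast
  have "finite P"
    using P simple_graph_finite_verts[OF K]
    by (auto simp: contraction_partition_def partition_on_def intro: finite_UnionD)
  then have "hom_invariant \<F> (hom S)"
    using hom_invariant_subgraph[OF simple_graph_quotient_graph hom_invariant_quotient_graph[OF K inv P] S]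
    by blast
  moreover have "hom M = (hom S :: nat graph \<Rightarrow> nat)"
    using hom_iso_left[OF iso] by (rule ext)
  ultimately show ?thesis
    by simp
qed

lemma minor_closed_cl: "minor_closed (cl \<F>)"
  unfolding minor_closed_def
proof (intro ballI allI impI)
  fix K M :: "nat graph" assume "K \<in> cl \<F>" "simple_graph M" "minor M K"
  then show "M \<in> cl \<F>"
    using hom_invariant_minor[of K M] by (simp add: mem_cl_iff)
qed

end

lemma hom_equiv_complement_iff_if_closed:
  fixes G H :: "nat graph"
  assumes "\<forall>F\<in>\<F>. simple_graph F" "closed_contraction \<F>" "closed_deletion \<F>"
    and "simple_graph G" "simple_graph H"
  shows "hom_equiv \<F> G H \<longleftrightarrow> hom_equiv \<F> (complement G) (complement H)"
  using hom_equiv_complement_iff[of \<F> G H] hom_equiv_complement_if_closed[OF assms(1-3)] assms(4,5)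
  by blast

lemma hom_equiv_complement_iff_if_minor_closed_cl:
  fixes G H :: "nat graph"
  assumes simple: "\<forall>F\<in>\<F>. simple_graph F" and mc: "minor_closed (cl \<F>)"
    and G: "simple_graph G" and H: "simple_graph H"
  shows "hom_equiv \<F> G H \<longleftrightarrow> hom_equiv \<F> (complement G) (complement H)"
proof -
  have cl_simple: "\<forall>F\<in>cl \<F>. simple_graph F"
    by (simp add: cl_def)
  have "hom_equiv (cl \<F>) G H \<longleftrightarrow> hom_equiv (cl \<F>) (complement G) (complement H)"
    using closed_contraction_if_minor_closed[OF mc] closed_deletion_if_minor_closed[OF mc cl_simple]
    by (intro hom_equiv_complement_iff_if_closed[OF cl_simple] G H)
  then show ?thesis
    using hom_equiv_cl_iff[OF simple G H]
      hom_equiv_cl_iff[OF simple simple_graph_complement[OF G] simple_graph_complement[OF H]]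
    by simp
qed

theorem theorem8:
  fixes \<F> :: "nat graph set"
  assumes "\<forall>F\<in>\<F>. simple_graph F"
  shows "(closed_contraction \<F> \<and> closed_deletion \<F> \<longrightarrow>
           (\<forall>G H :: nat graph. simple_graph G \<longrightarrow> simple_graph H \<longrightarrow>
              (hom_equiv \<F> G H \<longleftrightarrow> hom_equiv \<F> (complement G) (complement H))))
       \<and> ((\<forall>G H :: nat graph. simple_graph G \<longrightarrow> simple_graph H \<longrightarrow>
              (hom_equiv \<F> G H \<longleftrightarrow> hom_equiv \<F> (complement G) (complement H)))
           \<longleftrightarrow> minor_closed (cl \<F>))"
proof (intro conjI iffI)
  show "closed_contraction \<F> \<and> closed_deletion \<F> \<longrightarrow>
      (\<forall>G H :: nat graph. simple_graph G \<longrightarrow> simple_graph H \<longrightarrow>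
         (hom_equiv \<F> G H \<longleftrightarrow> hom_equiv \<F> (complement G) (complement H)))"
    using assms hom_equiv_complement_iff_if_closed by blast
next
  assume "\<forall>G H :: nat graph. simple_graph G \<longrightarrow> simple_graph H \<longrightarrow>
    (hom_equiv \<F> G H \<longleftrightarrow> hom_equiv \<F> (complement G) (complement H))"
  then show "minor_closed (cl \<F>)"
    by (intro minor_closed_cl) blast
next
  assume "minor_closed (cl \<F>)"
  then show "\<forall>G H :: nat graph. simple_graph G \<longrightarrow> simple_graph H \<longrightarrow>
    (hom_equiv \<F> G H \<longleftrightarrow> hom_equiv \<F> (complement G) (complement H))"
    using assms hom_equiv_complement_iff_if_minor_closed_cl by blast
qed

end
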